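(* Let $T=(V,L)$ be a substrate tree with capacities $c_h$ and bandwidths $b_v$ as described in the context, and let $\mathcal{J}=\langle N,B\rangle$ be a request. Then Algorithm 1 (the dynamic program described in the context) returns an optimal solution of the Survivable Virtual Cluster Embedding Problem (an SVCE of $\mathcal{J}$ using the minimum total number of VM slots $\sum_{h\in H}\mathcal{C}_s(h)$) if the instance is feasible (i.e. some SVCE of $\mathcal{J}$ exists), and returns "Infeasible" otherwise.
   Context: Substrate: an undirected tree $T=(V,L)$ with $V=H\cup S$ (disjoint), where $H$ is the set of physical machines (PMs), which are exactly the leaves, and $S$ is the set of switches (internal nodes). The tree is rooted at a fixed node $r\in S$. For $v\in V$, $T_v$ is the subtree rooted at $v$, $l_v$ is the out-bound link of $T_v$ (the link from $v$ to its parent; the root has none), and $d_v$ is the number of children of $v$, which are ordered $u_1,\dots,u_{d_v}$. Each PM $h$ has $c_h\in\mathbb{Z}_{\ge0}$ available VM slots; each non-root node $v$ has available bandwidth $b_v\ge 0$ on $l_v$ (for the root we use the convention $b_r=+\infty$). A request is $\mathcal{J}=\langle N,B\rangle$ with $N$ a positive integer (number of VMs) and $B>0$ (per-VM bandwidth). VCE: given a tree with PM capacities $c_h$ and link bandwidths $b_v$, a virtual cluster embedding of $\langle N,B\rangle$ is a function $\mathcal{C}:H\to\mathbb{Z}_{\ge 0}$ with $\mathcal{C}(h)\le c_h$ for all $h$, $\sum_{h\in H}\mathcal{C}(h)=N$, and $\min\{n_v,N-n_v\}\cdot B\le b_v$ for every link $l_v$, where $n_v=\sum_{h\in H\cap T_v}\mathcal{C}(h)$.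 SVCE: a pair $(\mathcal{C}_s,\mathcal{B}_s)$ with $\mathcal{C}_s:H\to\mathbb{Z}_{\ge0}$, $\mathcal{C}_s(h)\le c_h$, and $\mathcal{B}_s:L\to\mathbb{R}_{\ge 0}$, $\mathcal{B}_s(l_v)\le b_v$, such that for every PM $F\in H$ there exists a VCE of $\mathcal{J}$ in the tree $(V\setminus\{F\},L\setminus\{l_F\})$ whose PM capacities are $\mathcal{C}_s(h)$ ($h\ne F$) and whose link bandwidths are $\mathcal{B}_s(l_v)$. The Survivable Virtual Cluster Embedding Problem (SVCEP) asks for an SVCE minimizing $\sum_{h\in H}\mathcal{C}_s(h)$. Notation: $\Lambda_v=\big([0,b_v/B]\cup[N-b_v/B,N]\big)\cap[0,N]$, $\overline\Lambda_v=[0,N]\setminus\Lambda_v$, and, when $N-b_v/B>N/2$, $\lambda_v=\lceil N-b_v/B\rceil$ (this is the case whenever $\overline\Lambda_v\neq\emptyset$). For $x\in\{0,\dots,N\}$ let $m_v(x)=x$ if $x\in\Lambda_v$ and $m_v(x)=\lambda_v$ if $x\in\overline\Lambda_v$. Algorithm 1: processing nodes bottom-up, it computes tables indexed by $n_0,n_1\in\{0,\dots,N\}$. For a PM $h$: $N_h[n_0,n_1]=n_0$ if $n_1=0$ and $n_0\in[0,c_h]\cap\Lambda_h$; $N_h[n_0,n_1]=\lambda_h$ if $n_1=0$, $n_0\in\overline\Lambda_h$ and $\lambda_h\le c_h$; and $N_h[n_0,n_1]=\infty$ otherwise. For a switch $v$: $N'_v[n_0,n_1,0]=0$ if $n_0=n_1=0$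 and $\infty$ otherwise; for $k=1,\dots,d_v$, $N'_v[n_0,n_1,k]=\min\{N'_v[n_0',n_1',k-1]+N_{u_k}[n_0'',n_1'']\}$, the minimum over $n_0',n_1',n_0'',n_1''\in\{0,\dots,N\}$ with $n_0'+n_0''\ge n_0$ and $\min\{n_0'+n_1'',\,n_0''+n_1'\}\ge n_1$; finally $N_v[n_0,n_1]=N'_v[m_v(n_0),m_v(n_1),d_v]$. ($N_v[n_0,n_1]$ is intended as the minimum number of VMs to place in $T_v$ so that $T_v$ offers at least $n_0$ working VMs with no failure and at least $n_1$ working VMs under any single-PM failure in $T_v$, respecting bandwidths.) If $N_r[N,N]=\infty$ the algorithm returns "Infeasible"; otherwise it backtracks through the minimizing choices to obtain the VM allocation $\mathcal{C}_s(h)$ for each PM and sets each $\mathcal{B}_s(l_v)$ to the hose-model bandwidth $B\cdot\max\{\min\{a_0,N-a_0\},\min\{a_1,N-a_1\}\}$ determined by the numbers $a_0,a_1$ of working VMs chosen for $T_v$, and returns $(\mathcal{C}_s,\mathcal{B}_s)$. *)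

theory Defs
  imports Complex_Main "HOL-Library.Extended_Nat"
begin

text \<open>PM c b is a physical machine (a leaf) with c available VM slots
  and available bandwidth b on its out-bound link; Switch b ts is a switch whose
  out-bound link has bandwidth b and whose ordered children are ts.  The bandwidth
  stored at the root is ignored (convention b_r = infinity).  Nodes are identified by
  their positions (paths of child indices, 0-based) from the root; the empty path is
  the root r.\<close>

datatype stree = PM nat real | Switch real "stree list"

fun valid :: "stree \<Rightarrow> nat list \<Rightarrow> bool" where
  "valid t [] = True"
| "valid (PM c b) (i # p) = False"
| "valid (Switch b ts) (i # p) = (i < length ts \<and> valid (ts ! i) p)"

fun subtree :: "stree \<Rightarrow> nat list \<Rightarrow> stree" where
  "subtree t [] = t"
| "subtree (PM c b) (i # p) = PM c b"
| "subtree (Switch b ts) (i # p) = subtree (ts ! i) p"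

fun is_pm :: "stree \<Rightarrow> bool" where
  "is_pm (PM c b) = True"
| "is_pm (Switch b ts) = False"

fun bw_of :: "stree \<Rightarrow> real" where
  "bw_of (PM c b) = b"
| "bw_of (Switch b ts) = b"

fun cap_of :: "stree \<Rightarrow> nat" where
  "cap_of (PM c b) = c"
| "cap_of (Switch b ts) = 0"

text \<open>V: all nodes; H: the PMs (leaves); links are identified with their lower end
  (every non-root node v has the out-bound link l_v).\<close>
definition nodes :: "stree \<Rightarrow> nat list set" where
  "nodes t = {p. valid t p}"

definition pms :: "stree \<Rightarrow> nat list set" where
  "pms t = {p. valid t p \<and> is_pm (subtree t p)}"

definition cap :: "stree \<Rightarrow> nat list \<Rightarrow> nat" where
  "cap t h = cap_of (subtree t h)"

definition bw :: "stree \<Rightarrow> nat list \<Rightarrow> real" where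
  "bw t v = bw_of (subtree t v)"

definition wf_substrate :: "stree \<Rightarrow> bool" where
  "wf_substrate t \<longleftrightarrow> \<not> is_pm t \<and>
     (\<forall>p \<in> nodes t. (\<forall>b ts. subtree t p = Switch b ts \<longrightarrow> ts \<noteq> []) \<and>
                     (p \<noteq> [] \<longrightarrow> 0 \<le> bw t p))"

text \<open>Generic VCE on a tree with PM set Hs, link set Ls (given by their lower nodes),
  PM capacities capf and link bandwidths bwf.  n_v counts the VMs in T_v, i.e. on PMs
  of Hs whose path extends v.\<close>
definition vce :: "nat \<Rightarrow> real \<Rightarrow> nat list set \<Rightarrow> nat list set \<Rightarrow>
    (nat list \<Rightarrow> nat) \<Rightarrow> (nat list \<Rightarrow> real) \<Rightarrow> (nat list \<Rightarrow> nat) \<Rightarrow> bool" where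
  "vce N B Hs Ls capf bwf C \<longleftrightarrow>
     (\<forall>h \<in> Hs. C h \<le> capf h) \<and> (\<Sum>h \<in> Hs. C h) = N \<and>
     (\<forall>v \<in> Ls. let nv = (\<Sum>h \<in> {h \<in> Hs. \<exists>q. h = v @ q}. C h) in
         min (real nv) (real N - real nv) * B \<le> bwf v)"

text \<open>SVCE of request (N,B) in substrate t: the failure of PM F removes F and l_F.\<close>
definition is_svce :: "nat \<Rightarrow> real \<Rightarrow> stree \<Rightarrow> (nat list \<Rightarrow> nat) \<Rightarrow> (nat list \<Rightarrow> real) \<Rightarrow> bool" where
  "is_svce N B t Cs Bs \<longleftrightarrow>
     (\<forall>h \<in> pms t. Cs h \<le> cap t h) \<and>
     (\<forall>v \<in> nodes t - {[]}. 0 \<le> Bs v \<and> Bs v \<le> bw t v) \<and>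
     (\<forall>F \<in> pms t. \<exists>C. vce N B (pms t - {F}) (nodes t - {[], F}) Cs Bs C)"

definition optimal_svce :: "nat \<Rightarrow> real \<Rightarrow> stree \<Rightarrow> (nat list \<Rightarrow> nat) \<Rightarrow> (nat list \<Rightarrow> real) \<Rightarrow> bool" where
  "optimal_svce N B t Cs Bs \<longleftrightarrow> is_svce N B t Cs Bs \<and>
     (\<forall>Cs' Bs'. is_svce N B t Cs' Bs' \<longrightarrow> (\<Sum>h \<in> pms t. Cs h) \<le> (\<Sum>h \<in> pms t. Cs' h))"

definition inLam :: "nat \<Rightarrow> real \<Rightarrow> real \<Rightarrow> nat \<Rightarrow> bool" where
  "inLam N B b x \<longleftrightarrow> real x \<le> b / B \<or> real N - b / B \<le> real x"

definition lam :: "nat \<Rightarrow> real \<Rightarrow> real \<Rightarrow> nat" where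
  "lam N B b = nat \<lceil>real N - b / B\<rceil>"

definition mv :: "nat \<Rightarrow> real \<Rightarrow> real \<Rightarrow> nat \<Rightarrow> nat" where
  "mv N B b x = (if inLam N B b x then x else lam N B b)"

text \<open>Table of a PM with c slots and out-bound bandwidth b (\<infinity> = infeasible).\<close>
definition leaf_tbl :: "nat \<Rightarrow> real \<Rightarrow> nat \<Rightarrow> real \<Rightarrow> nat \<Rightarrow> nat \<Rightarrow> enat" where
  "leaf_tbl N B c b n0 n1 =
     (if n1 = 0 \<and> n0 \<le> c \<and> inLam N B b n0 then enat n0
      else if n1 = 0 \<and> \<not> inLam N B b n0 \<and> lam N B b \<le> c then enat (lam N B b)
      else \<infinity>)"

definition init_tbl :: "nat \<Rightarrow> nat \<Rightarrow> enat" where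
  "init_tbl n0 n1 = (if n0 = 0 \<and> n1 = 0 then 0 else \<infinity>)"

text \<open>One step N'_v[.,.,k] from N'_v[.,.,k-1] (= P) and N_{u_k} (= Q); minimum of the
  empty set is \<infinity>.\<close>
definition combine :: "nat \<Rightarrow> (nat \<Rightarrow> nat \<Rightarrow> enat) \<Rightarrow> (nat \<Rightarrow> nat \<Rightarrow> enat) \<Rightarrow> nat \<Rightarrow> nat \<Rightarrow> enat" where
  "combine N P Q n0 n1 =
     (INF x \<in> {(a0, a1, b0, b1). a0 \<le> N \<and> a1 \<le> N \<and> b0 \<le> N \<and> b1 \<le> N \<and>
                  n0 \<le> a0 + b0 \<and> n1 \<le> min (a0 + b1) (b0 + a1)}.
        (case x of (a0, a1, b0, b1) \<Rightarrow> P a0 a1 + Q b0 b1))"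

fun dp :: "nat \<Rightarrow> real \<Rightarrow> stree \<Rightarrow> nat \<Rightarrow> nat \<Rightarrow> enat" where
  "dp N B (PM c b) = leaf_tbl N B c b"
| "dp N B (Switch b ts) =
     (\<lambda>n0 n1. foldl (combine N) init_tbl (map (dp N B) ts) (mv N B b n0) (mv N B b n1))"

definition partial :: "nat \<Rightarrow> real \<Rightarrow> stree list \<Rightarrow> nat \<Rightarrow> nat \<Rightarrow> nat \<Rightarrow> enat" where
  "partial N B ts k = foldl (combine N) init_tbl (map (dp N B) (take k ts))"

text \<open>N_r for the root (m_r is the identity since b_r = \<infinity>).\<close>
fun root_tbl :: "nat \<Rightarrow> real \<Rightarrow> stree \<Rightarrow> nat \<Rightarrow> nat \<Rightarrow> enat" where
  "root_tbl N B (Switch b ts) = partial N B ts (length ts)"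
| "root_tbl N B (PM c b) = dp N B (PM c b)"

text \<open>The effective (mapped) numbers of working VMs of a node given the pair tg
  requested by its parent (the root is requested (N,N) and uses no mapping).\<close>
definition eff :: "nat \<Rightarrow> real \<Rightarrow> stree \<Rightarrow> nat list \<Rightarrow> nat \<times> nat \<Rightarrow> nat \<times> nat" where
  "eff N B t p x = (if p = [] then x else (mv N B (bw t p) (fst x), mv N B (bw t p) (snd x)))"

text \<open>A backtracking run: tg p is the pair (n0,n1) chosen for node p by its parent
  (tg [] = (N,N)); for a switch p with children u_1..u_d, st p k is the pair at which
  N'_p[.,.,k] is looked up, starting with st p d = eff(tg p); going from k+1 to k a
  minimizing choice (st p k, tg (p@[k])) of the recurrence is taken.\<close>
definition bt_run :: "nat \<Rightarrow> real \<Rightarrow> stree \<Rightarrow> (nat list \<Rightarrow> nat \<times> nat) \<Rightarrow>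
    (nat list \<Rightarrow> nat \<Rightarrow> nat \<times> nat) \<Rightarrow> bool" where
  "bt_run N B t tg st \<longleftrightarrow> tg [] = (N, N) \<and>
     (\<forall>p \<in> nodes t. \<forall>b ts. subtree t p = Switch b ts \<longrightarrow>
        st p (length ts) = eff N B t p (tg p) \<and>
        (\<forall>k < length ts.
           fst (st p k) \<le> N \<and> snd (st p k) \<le> N \<and>
           fst (tg (p @ [k])) \<le> N \<and> snd (tg (p @ [k])) \<le> N \<and>
           fst (st p (Suc k)) \<le> fst (st p k) + fst (tg (p @ [k])) \<and>
           snd (st p (Suc k)) \<le> min (fst (st p k) + snd (tg (p @ [k])))
                                    (fst (tg (p @ [k])) + snd (st p k)) \<and>
           partial N B ts k (fst (st p k)) (snd (st p k))
             + dp N B (ts ! k) (fst (tg (p @ [k]))) (snd (tg (p @ [k])))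
           = partial N B ts (Suc k) (fst (st p (Suc k))) (snd (st p (Suc k)))))"

definition hose :: "nat \<Rightarrow> real \<Rightarrow> nat \<times> nat \<Rightarrow> real" where
  "hose N B a = B * max (min (real (fst a)) (real N - real (fst a)))
                        (min (real (snd a)) (real N - real (snd a)))"

text \<open>Possible outputs of Algorithm 1 (None = "Infeasible"); ties in the backtracking
  may be broken arbitrarily.\<close>
definition alg1_output :: "nat \<Rightarrow> real \<Rightarrow> stree \<Rightarrow>
    ((nat list \<Rightarrow> nat) \<times> (nat list \<Rightarrow> real)) option \<Rightarrow> bool" where
  "alg1_output N B t R \<longleftrightarrow>
     (if root_tbl N B t N N = \<infinity> then R = None
      else (\<exists>Cs Bs tg st. R = Some (Cs, Bs) \<and> bt_run N B t tg st \<and>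
              (\<forall>h \<in> pms t. enat (Cs h) = dp N B (subtree t h) (fst (tg h)) (snd (tg h))) \<and>
              (\<forall>v \<in> nodes t - {[]}. Bs v = hose N B (eff N B t v (tg v)))))"

end

theory Submission
  imports Defs
begin

text \<open>Optimality is proved as a sandwich.  For any allocation \<kappa> of VM slots in a subtree T_u,
  let A be the largest number of VMs that \<kappa> can host in T_u respecting all bandwidths and f
  the least such number after a single PM failure in T_u.  By induction on u,
  N_u[min N A, min N f] \<le> \<Sum>\<kappa>, because a failure affects exactly one child; at the root an SVCE
  gives A, f \<ge> N, so N_r[N, N] is a lower bound on the cost of every SVCE.
  Conversely, backtracking assigns each node v targets (a0, a1), rounded into \<Lambda>_v, and the
  allocation it returns costs exactly N_r[N, N].  When PM F fails, let every T_v supply a1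
  working VMs if it contains F and a0 otherwise; the hose bandwidths chosen for these targets
  fit into b_v thanks to the rounding, and a bottom-up induction keeps enough VM counts
  realizable in every subtree that N VMs can be placed at the root.  So the output is an
  SVCE of cost N_r[N, N], hence optimal, and "Infeasible" is returned iff N_r[N, N] = \<infinity>.\<close>

fun wf_tree :: "stree \<Rightarrow> bool" where
  "wf_tree (PM c b) = (0 \<le> b)"
| "wf_tree (Switch b ts) = (0 \<le> b \<and> ts \<noteq> [] \<and> (\<forall>u\<in>set ts. wf_tree u))"

lemma nodes_PM: "nodes (PM c b) = {[]}"
  unfolding nodes_def by (auto elim: valid.elims)

lemma nodes_Switch: "nodes (Switch b ts) = insert [] (\<Union>i<length ts. (#) i ` nodes (ts ! i))"
proof (rule set_eqI)
  show "p \<in> nodes (Switch b ts) \<longleftrightarrow> p \<in> insert [] (\<Union>i<length ts. (#) i ` nodes (ts ! i))" for p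
    unfolding nodes_def by (cases p) auto
qed

lemma pms_PM: "pms (PM c b) = {[]}"
  unfolding pms_def by (auto elim: valid.elims)

lemma pms_Switch: "pms (Switch b ts) = (\<Union>i<length ts. (#) i ` pms (ts ! i))"
proof (rule set_eqI)
  show "p \<in> pms (Switch b ts) \<longleftrightarrow> p \<in> (\<Union>i<length ts. (#) i ` pms (ts ! i))" for p
    unfolding pms_def by (cases p) auto
qed

lemma finite_nodes: "finite (nodes u)"
  by (induction u) (auto simp: nodes_PM nodes_Switch)

lemma pms_subset_nodes: "pms u \<subseteq> nodes u"
  unfolding pms_def nodes_def by auto

lemma finite_pms: "finite (pms u)"
  using finite_nodes pms_subset_nodes finite_subset by blast

lemma pms_nonempty: "wf_tree u \<Longrightarrow> pms u \<noteq> {}"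
proof (induction u)
  case (PM c b) then show ?case by (simp add: pms_PM)
next
  case (Switch b ts)
  then have "0 < length ts" by simp
  with Switch show ?case by (auto simp: pms_Switch)
qed

lemma sum_pms_Switch:
  "(\<Sum>h\<in>pms (Switch b ts). f h) = (\<Sum>i<length ts. \<Sum>h\<in>pms (ts ! i). f (i # h))"
  unfolding pms_Switch
  by (subst sum.UNION_disjoint) (auto simp: finite_pms sum.reindex inj_on_def)

lemma bw_Switch_Cons [simp]: "bw (Switch b ts) (i # p) = bw (ts ! i) p"
  by (simp add: bw_def)

lemma cap_Switch_Cons [simp]: "cap (Switch b ts) (i # p) = cap (ts ! i) p"
  by (simp add: cap_def)

lemma bw_Nil [simp]: "bw u [] = bw_of u"
  by (simp add: bw_def)

lemma bw_Switch_comp_Cons: "bw (Switch b ts) \<circ> (#) i = bw (ts ! i)"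
  by (rule ext) simp

lemma valid_append: "valid u (p @ q) = (valid u p \<and> valid (subtree u p) q)"
proof (induction u p rule: valid.induct)
  case (2 c b i p) then show ?case by (cases q) auto
qed auto

lemma subtree_append: "valid u p \<Longrightarrow> subtree u (p @ q) = subtree (subtree u p) q"
  by (induction u p rule: valid.induct) auto

lemma wf_tree_subtree: "wf_tree u \<Longrightarrow> valid u p \<Longrightarrow> wf_tree (subtree u p)"
  by (induction u p rule: valid.induct) auto

lemma wf_tree_bw_nonneg: "wf_tree u \<Longrightarrow> v \<in> nodes u \<Longrightarrow> 0 \<le> bw u v"
  using wf_tree_subtree[of u v] by (cases "subtree u v") (auto simp: nodes_def bw_def)

lemma pms_no_extension: "h \<in> pms u \<Longrightarrow> valid u (h @ q) \<Longrightarrow> q = []"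
  by (cases q) (auto simp: pms_def valid_append elim: is_pm.elims)

lemma pms_below_pm: "F \<in> pms u \<Longrightarrow> {h \<in> pms u. \<exists>q. h = F @ q} = {F}"
  using pms_no_extension by (fastforce simp: pms_def)

lemma nodes_snoc:
  assumes "p \<in> nodes t" "subtree t p = Switch b ts" "i < length ts"
  shows "p @ [i] \<in> nodes t \<and> subtree t (p @ [i]) = ts ! i"
  using assms by (auto simp: nodes_def valid_append subtree_append)

lemma nodes_snocD:
  assumes "p @ [i] \<in> nodes t"
  shows "p \<in> nodes t \<and> (\<exists>b ts. subtree t p = Switch b ts \<and> i < length ts)"
proof -
  have "valid t p" "valid (subtree t p) [i]"
    using assms by (auto simp: nodes_def valid_append)
  then show ?thesis by (cases "subtree t p") (auto simp: nodes_def)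
qed

lemma wf_tree_if_nodes:
  "\<forall>p\<in>nodes u. (\<forall>b ts. subtree u p = Switch b ts \<longrightarrow> ts \<noteq> []) \<and> 0 \<le> bw u p \<Longrightarrow> wf_tree u"
proof (induction u)
  case (Switch b ts)
  have "wf_tree (ts ! i)" if i: "i < length ts" for i
  proof (rule Switch.IH[OF nth_mem[OF i]], rule ballI)
    fix p assume "p \<in> nodes (ts ! i)"
    then have "i # p \<in> nodes (Switch b ts)" using i by (auto simp: nodes_Switch)
    with Switch.prems have "(\<forall>b' ts'. subtree (Switch b ts) (i # p) = Switch b' ts' \<longrightarrow> ts' \<noteq> [])
        \<and> 0 \<le> bw (Switch b ts) (i # p)" by blast
    then show "(\<forall>b' ts'. subtree (ts ! i) p = Switch b' ts' \<longrightarrow> ts' \<noteq> []) \<and> 0 \<le> bw (ts ! i) p"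
      by simp
  qed
  moreover have "ts \<noteq> []" "0 \<le> b" using Switch.prems by (auto simp: nodes_Switch)
  ultimately show ?case by (auto simp: in_set_conv_nth)
qed (auto simp: nodes_PM)

lemma wf_substrate_root:
  assumes "wf_substrate t"
  obtains b ts where "t = Switch b ts" "ts \<noteq> []" "\<forall>i<length ts. wf_tree (ts ! i)"
proof -
  obtain b ts where t: "t = Switch b ts" using assms by (cases t) (auto simp: wf_substrate_def)
  have W: "(\<forall>b ts. subtree t p = Switch b ts \<longrightarrow> ts \<noteq> []) \<and> (p \<noteq> [] \<longrightarrow> 0 \<le> bw t p)"
    if "p \<in> nodes t" for p
    using assms that by (auto simp: wf_substrate_def)
  have "ts \<noteq> []" using W[of "[]"] t by (simp add: nodes_def)
  moreover have "wf_tree (ts ! i)" if i: "i < length ts" for i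
  proof (rule wf_tree_if_nodes, rule ballI)
    fix p assume "p \<in> nodes (ts ! i)"
    then have "i # p \<in> nodes t" using i t by (auto simp: nodes_Switch)
    from W[OF this] show "(\<forall>b ts'. subtree (ts ! i) p = Switch b ts' \<longrightarrow> ts' \<noteq> []) \<and> 0 \<le> bw (ts ! i) p"
      using t by simp
  qed
  ultimately show ?thesis using that t by blast
qed

lemma wf_substrate_bw_nonneg: "wf_substrate t \<Longrightarrow> v \<in> nodes t \<Longrightarrow> v \<noteq> [] \<Longrightarrow> 0 \<le> bw t v"
  by (auto simp: wf_substrate_def)

lemma wf_substrate_pms_nonroot: "wf_substrate t \<Longrightarrow> h \<in> pms t \<Longrightarrow> h \<noteq> []"
  by (auto simp: wf_substrate_def pms_def)


section \<open>Hose constraints and embeddings\<close>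

definition hose_ok :: "nat \<Rightarrow> real \<Rightarrow> real \<Rightarrow> nat \<Rightarrow> bool" where
  "hose_ok N B b x \<longleftrightarrow> min (real x) (real N - real x) * B \<le> b"

definition vm_count :: "stree \<Rightarrow> (nat list \<Rightarrow> nat) \<Rightarrow> nat" where
  "vm_count u C = (\<Sum>h\<in>pms u. C h)"

lemma vm_count_PM [simp]: "vm_count (PM c b) C = C []"
  by (simp add: vm_count_def pms_PM)

lemma vm_count_Switch: "vm_count (Switch b ts) C = (\<Sum>i<length ts. vm_count (ts ! i) (C \<circ> (#) i))"
  by (simp add: vm_count_def sum_pms_Switch)

text \<open>The out-bound link of the root of u is included, with bandwidth bwf [].\<close>
function hose_feasible :: "nat \<Rightarrow> real \<Rightarrow> stree \<Rightarrow> (nat list \<Rightarrow> real) \<Rightarrow> (nat list \<Rightarrow> nat) \<Rightarrow> bool" where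
  "hose_feasible N B (PM c b) bwf C = hose_ok N B (bwf []) (C [])"
| "hose_feasible N B (Switch b ts) bwf C \<longleftrightarrow> hose_ok N B (bwf []) (vm_count (Switch b ts) C) \<and>
      (\<forall>i<length ts. hose_feasible N B (ts ! i) (bwf \<circ> (#) i) (C \<circ> (#) i))"
  by pat_completeness auto
termination
  by (relation "measure (\<lambda>(_, _, u, _, _). size u)")
    (auto, metis le_imp_less_Suc nth_mem order_refl size_list_estimation')

lemma hose_feasible_iff:
  "hose_feasible N B u bwf C \<longleftrightarrow>
     (\<forall>v\<in>nodes u. hose_ok N B (bwf v) (\<Sum>h\<in>{h\<in>pms u. \<exists>q. h = v @ q}. C h))"
proof (induction u arbitrary: bwf C)
  case (PM c b)
  then show ?case by (simp add: nodes_PM pms_PM)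
next
  case (Switch b ts)
  have below_child: "(\<Sum>h\<in>{h\<in>pms (Switch b ts). \<exists>q. h = (i # v) @ q}. C h)
        = (\<Sum>h\<in>{h\<in>pms (ts ! i). \<exists>q. h = v @ q}. (C \<circ> (#) i) h)" if "i < length ts" for i v
  proof -
    have "{h\<in>pms (Switch b ts). \<exists>q. h = (i # v) @ q} = (#) i ` {h\<in>pms (ts ! i). \<exists>q. h = v @ q}"
      using that by (auto simp: pms_Switch)
    then show ?thesis by (simp add: sum.reindex)
  qed
  have "hose_feasible N B (Switch b ts) bwf C \<longleftrightarrow> hose_ok N B (bwf []) (vm_count (Switch b ts) C) \<and>
      (\<forall>i<length ts. \<forall>v\<in>nodes (ts ! i). hose_ok N B (bwf (i # v))
          (\<Sum>h\<in>{h\<in>pms (ts ! i). \<exists>q. h = v @ q}. (C \<circ> (#) i) h))"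
    using Switch.IH by (auto simp: nth_mem)
  also have "\<dots> \<longleftrightarrow> (\<forall>v\<in>nodes (Switch b ts).
      hose_ok N B (bwf v) (\<Sum>h\<in>{h\<in>pms (Switch b ts). \<exists>q. h = v @ q}. C h))"
    unfolding nodes_Switch using below_child by (auto simp: vm_count_def)
  finally show ?case .
qed

lemma hose_feasible_root: "hose_feasible N B u bwf C \<Longrightarrow> hose_ok N B (bwf []) (vm_count u C)"
  by (cases u) auto

lemma hose_ok_0: "0 \<le> b \<Longrightarrow> 0 < B \<Longrightarrow> hose_ok N B b 0"
  by (simp add: hose_ok_def)

lemma hose_ok_mono: "hose_ok N B b x \<Longrightarrow> b \<le> b' \<Longrightarrow> hose_ok N B b' x"
  by (simp add: hose_ok_def)

lemma hose_ok_full: "0 < B \<Longrightarrow> hose_ok N B (real N * B) x"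
  unfolding hose_ok_def by (rule mult_right_mono) auto

lemma hose_feasible_mono:
  "hose_feasible N B u bwf C \<Longrightarrow> \<forall>v\<in>nodes u. bwf v \<le> bwf' v \<Longrightarrow> hose_feasible N B u bwf' C"
  by (auto simp: hose_feasible_iff intro: hose_ok_mono)

definition realizable :: "nat \<Rightarrow> real \<Rightarrow> stree \<Rightarrow> (nat list \<Rightarrow> real) \<Rightarrow> (nat list \<Rightarrow> nat) \<Rightarrow> nat set" where
  "realizable N B u bwf \<kappa> = {vm_count u C | C. (\<forall>h\<in>pms u. C h \<le> \<kappa> h) \<and> hose_feasible N B u bwf C}"

lemma sum_fun_upd_zero:
  fixes C :: "'a \<Rightarrow> nat"
  assumes "finite S"
  shows "(\<Sum>h\<in>S. (C(F := 0)) h) = (\<Sum>h\<in>S - {F}. C h)"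
proof -
  have "(\<Sum>h\<in>S. (C(F := 0)) h) = (\<Sum>h\<in>S - {F}. (C(F := 0)) h)"
    using assms by (cases "F \<in> S") (auto simp: sum.remove)
  then show ?thesis by simp
qed

text \<open>The bandwidth N B makes the constraint on the (non-existent) link above the root
  vacuous.\<close>
lemma realizable_if_vce_after_failure:
  assumes F: "F \<in> pms t" and B: "0 < B" and BsF: "0 \<le> Bs F"
    and vce: "vce N B (pms t - {F}) (nodes t - {[], F}) Cs Bs C"
  shows "N \<in> realizable N B t (Bs([] := real N * B)) (Cs(F := 0))"
proof -
  have C: "\<forall>h \<in> pms t - {F}. C h \<le> Cs h" "(\<Sum>h\<in>pms t - {F}. C h) = N"
    "\<And>v. v \<in> nodes t - {[], F} \<Longrightarrow> hose_ok N B (Bs v) (\<Sum>h\<in>{h\<in>pms t - {F}. \<exists>q. h = v @ q}. C h)"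
    using vce unfolding vce_def hose_ok_def Let_def by auto
  let ?C = "C(F := 0)"
  have "hose_ok N B ((Bs([] := real N * B)) w) (\<Sum>h\<in>{h\<in>pms t. \<exists>q. h = w @ q}. ?C h)"
    if w: "w \<in> nodes t" for w
  proof (cases "w = []")
    case False
    show ?thesis
    proof (cases "w = F")
      case True
      then show ?thesis using False pms_below_pm[OF F] hose_ok_0[OF BsF B] by simp
    next
      case False
      have "{h\<in>pms t. \<exists>q. h = w @ q} - {F} = {h\<in>pms t - {F}. \<exists>q. h = w @ q}" by auto
      then show ?thesis
        using C(3)[of w] w \<open>w \<noteq> []\<close> False sum_fun_upd_zero[of "{h\<in>pms t. \<exists>q. h = w @ q}" C F]
        by (simp add: finite_pms)
    qed
  qed (simp add: hose_ok_full[OF B])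
  then have "hose_feasible N B t (Bs([] := real N * B)) ?C"
    unfolding hose_feasible_iff by blast
  moreover have "vm_count t ?C = N"
    using C(2) sum_fun_upd_zero[OF finite_pms] by (simp add: vm_count_def)
  ultimately show ?thesis
    unfolding realizable_def using C(1) by (auto intro!: exI[of _ ?C])
qed

lemma vce_after_failure_if_realizable:
  assumes F: "F \<in> pms t" and "N \<in> realizable N B t (Bs([] := X)) (Cs(F := 0))"
  shows "\<exists>C. vce N B (pms t - {F}) (nodes t - {[], F}) Cs Bs C"
proof -
  obtain C where C: "\<forall>h\<in>pms t. C h \<le> (Cs(F := 0)) h" "vm_count t C = N"
    "hose_feasible N B t (Bs([] := X)) C"
    using assms(2) unfolding realizable_def by auto
  have "C F = 0" using C(1) F by fastforce
  then have "C = C(F := 0)" by auto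
  then have drop_F: "(\<Sum>h\<in>S. C h) = (\<Sum>h\<in>S - {F}. C h)" if "finite S" for S
    using sum_fun_upd_zero[OF that, of C F] by simp
  have "hose_ok N B (Bs v) (\<Sum>h\<in>{h\<in>pms t - {F}. \<exists>q. h = v @ q}. C h)"
    if v: "v \<in> nodes t - {[], F}" for v
  proof -
    have "{h\<in>pms t. \<exists>q. h = v @ q} - {F} = {h\<in>pms t - {F}. \<exists>q. h = v @ q}" by auto
    then show ?thesis
      using C(3) v drop_F[of "{h\<in>pms t. \<exists>q. h = v @ q}"] unfolding hose_feasible_iff
      by (auto simp: finite_pms)
  qed
  moreover have "(\<Sum>h\<in>pms t - {F}. C h) = N" using C(2) drop_F[OF finite_pms] by (simp add: vm_count_def)
  ultimately have "vce N B (pms t - {F}) (nodes t - {[], F}) Cs Bs C"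
    using C(1) unfolding vce_def Let_def hose_ok_def by (auto split: if_splits)
  then show ?thesis by blast
qed


lemma partial_0 [simp]: "partial N B ts 0 = init_tbl"
  by (simp add: partial_def)

lemma partial_Suc:
  "k < length ts \<Longrightarrow> partial N B ts (Suc k) = combine N (partial N B ts k) (dp N B (ts ! k))"
  by (simp add: partial_def take_Suc_conv_app_nth)

lemma dp_Switch:
  "dp N B (Switch b ts) n0 n1 = partial N B ts (length ts) (mv N B b n0) (mv N B b n1)"
  by (simp add: partial_def)

definition combine_choices :: "nat \<Rightarrow> nat \<Rightarrow> nat \<Rightarrow> (nat \<times> nat \<times> nat \<times> nat) set" where
  "combine_choices N n0 n1 = {(a0, a1, b0, b1). a0 \<le> N \<and> a1 \<le> N \<and> b0 \<le> N \<and> b1 \<le> N \<and>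
     n0 \<le> a0 + b0 \<and> n1 \<le> min (a0 + b1) (b0 + a1)}"

lemma combine_eq_INF:
  "combine N P Q n0 n1 = (INF (a0, a1, b0, b1) \<in> combine_choices N n0 n1. P a0 a1 + Q b0 b1)"
  by (simp add: combine_def combine_choices_def)

lemma combine_le:
  assumes "a0 \<le> N" "a1 \<le> N" "b0 \<le> N" "b1 \<le> N" "n0 \<le> a0 + b0" "n1 \<le> min (a0 + b1) (b0 + a1)"
  shows "combine N P Q n0 n1 \<le> P a0 a1 + Q b0 b1"
  unfolding combine_eq_INF
  by (rule INF_lower2[of "(a0, a1, b0, b1)"]) (use assms in \<open>auto simp: combine_choices_def\<close>)

lemma combine_mono:
  "n0 \<le> n0' \<Longrightarrow> n1 \<le> n1' \<Longrightarrow> combine N P Q n0 n1 \<le> combine N P Q n0' n1'"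
  unfolding combine_eq_INF by (rule INF_superset_mono) (auto simp: combine_choices_def)

lemma combine_attained:
  assumes "n0 \<le> N" "n1 \<le> N"
  obtains a0 a1 b0 b1 where "a0 \<le> N" "a1 \<le> N" "b0 \<le> N" "b1 \<le> N" "n0 \<le> a0 + b0"
    "n1 \<le> min (a0 + b1) (b0 + a1)" "combine N P Q n0 n1 = P a0 a1 + Q b0 b1"
proof -
  let ?f = "\<lambda>(a0, a1, b0, b1). P a0 a1 + Q b0 b1"
  have "finite (combine_choices N n0 n1)"
    by (rule finite_subset[of _ "{..N} \<times> {..N} \<times> {..N} \<times> {..N}"]) (auto simp: combine_choices_def)
  moreover have "(N, N, N, N) \<in> combine_choices N n0 n1"
    using assms by (simp add: combine_choices_def)
  ultimately have "?f ` combine_choices N n0 n1 \<noteq> {}" "finite (?f ` combine_choices N n0 n1)"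
    by auto
  then have "Inf (?f ` combine_choices N n0 n1) \<in> ?f ` combine_choices N n0 n1"
    by (simp add: cInf_eq_Min)
  then obtain x where "x \<in> combine_choices N n0 n1" "combine N P Q n0 n1 = ?f x"
    unfolding combine_eq_INF by auto
  with that show ?thesis by (cases x) (auto simp: combine_choices_def)
qed

lemma partial_mono:
  "0 < k \<Longrightarrow> k \<le> length ts \<Longrightarrow> n0 \<le> n0' \<Longrightarrow> n1 \<le> n1' \<Longrightarrow>
   partial N B ts k n0 n1 \<le> partial N B ts k n0' n1'"
  by (cases k) (auto simp: partial_Suc intro: combine_mono)

context
  fixes N :: nat and B :: real and b :: real
  assumes B: "0 < B" and b: "0 \<le> b"
begin

lemma le_mv: "x \<le> mv N B b x"
proof (cases "inLam N B b x")
  case False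
  then have "int x < \<lceil>real N - b / B\<rceil>" by (simp add: inLam_def less_ceiling_iff)
  with False show ?thesis by (simp add: mv_def lam_def)
qed (simp add: mv_def)

lemma lam_le: "lam N B b \<le> N"
proof -
  have "0 \<le> b / B" using B b by simp
  then have "\<lceil>real N - b / B\<rceil> \<le> int N" by (simp add: ceiling_le_iff)
  then show ?thesis unfolding lam_def by linarith
qed

lemma mv_le: "x \<le> N \<Longrightarrow> mv N B b x \<le> N"
  using lam_le by (simp add: mv_def)

lemma inLam_mv: "inLam N B b (mv N B b x)"
proof -
  have "real N - b / B \<le> real (nat \<lceil>real N - b / B\<rceil>)" by linarith
  then show ?thesis by (simp add: mv_def inLam_def lam_def)
qed

lemma hose_ok_if_inLam: "inLam N B b x \<Longrightarrow> hose_ok N B b x"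
proof -
  assume "inLam N B b x"
  then have "real x * B \<le> b \<or> (real N - real x) * B \<le> b"
    using B by (auto simp: inLam_def field_simps)
  moreover have "min (real x) (real N - real x) * B \<le> real x * B"
    "min (real x) (real N - real x) * B \<le> (real N - real x) * B"
    using B by (auto intro: mult_right_mono)
  ultimately show ?thesis unfolding hose_ok_def by linarith
qed

lemma inLam_min_if_hose_ok: "hose_ok N B b x \<Longrightarrow> inLam N B b (min N x)"
proof (cases "x \<le> N")
  case True
  assume "hose_ok N B b x"
  then have "real x * B \<le> b \<or> (real N - real x) * B \<le> b"
    by (auto simp: hose_ok_def min_def split: if_splits)
  then show ?thesis using True B by (auto simp: inLam_def field_simps min_def)
next
  case False
  have "0 \<le> b / B" using B b by simp
  then show ?thesis using False by (auto simp: inLam_def min_def)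
qed

lemma mv_min_if_hose_ok: "hose_ok N B b x \<Longrightarrow> mv N B b (min N x) = min N x"
  using inLam_min_if_hose_ok by (simp add: mv_def)

lemma mv_0: "mv N B b 0 = 0"
  using B b by (simp add: mv_def inLam_def)

lemma leaf_tbl_finite:
  assumes "leaf_tbl N B c b n0 n1 \<noteq> \<infinity>"
  shows "n1 = 0 \<and> leaf_tbl N B c b n0 n1 = enat (mv N B b n0) \<and> mv N B b n0 \<le> c"
  using assms by (auto simp: leaf_tbl_def mv_def split: if_splits)

lemma hose_le_bw:
  assumes "fst e \<le> N" "snd e \<le> N" "inLam N B b (fst e)" "inLam N B b (snd e)"
  shows "0 \<le> hose N B e \<and> hose N B e \<le> b"
proof -
  define x where "x = min (real (fst e)) (real N - real (fst e))"
  define y where "y = min (real (snd e)) (real N - real (snd e))"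
  have "x * B \<le> b" "y * B \<le> b"
    using hose_ok_if_inLam[OF assms(3)] hose_ok_if_inLam[OF assms(4)]
    unfolding hose_ok_def x_def y_def by simp_all
  moreover have "0 \<le> x" using assms(1) by (simp add: x_def)
  moreover have "hose N B e = B * max x y" by (simp add: hose_def x_def y_def)
  ultimately show ?thesis using B by (auto simp: max_def mult.commute)
qed

end

lemma hose_ok_hose:
  assumes "0 < B" "x \<le> N" "a \<le> N" "min x (N - x) \<le> min a (N - a)" "a = fst e \<or> a = snd e"
  shows "hose_ok N B (hose N B e) x"
proof -
  have "min (real x) (real N - real x) = real (min x (N - x))" using assms(2) by (simp add: of_nat_diff)
  also have "\<dots> \<le> real (min a (N - a))" using assms(4) by linarith
  also have "\<dots> = min (real a) (real N - real a)" using assms(3) by (simp add: of_nat_diff)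
  also have "\<dots> \<le> max (min (real (fst e)) (real N - real (fst e))) (min (real (snd e)) (real N - real (snd e)))"
    using assms(5) by auto
  finally show ?thesis
    using assms(1) unfolding hose_ok_def hose_def by (simp add: mult.commute mult_right_mono)
qed


section \<open>The table is a lower bound\<close>

lemma realizable_PM: "realizable N B (PM c b) bwf \<kappa> = {x. x \<le> \<kappa> [] \<and> hose_ok N B (bwf []) x}"
proof -
  have "x \<in> realizable N B (PM c b) bwf \<kappa>" if "x \<le> \<kappa> []" "hose_ok N B (bwf []) x" for x
    unfolding realizable_def using that by (auto simp: pms_PM intro!: exI[of _ "\<lambda>_. x"])
  then show ?thesis unfolding realizable_def by (auto simp: pms_PM)
qed

lemma realizable_Switch:
  "x \<in> realizable N B (Switch b ts) bwf \<kappa> \<longleftrightarrow> hose_ok N B (bwf []) x \<and>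
     (\<exists>xs. x = (\<Sum>i<length ts. xs i) \<and>
        (\<forall>i<length ts. xs i \<in> realizable N B (ts ! i) (bwf \<circ> (#) i) (\<kappa> \<circ> (#) i)))"
    (is "?lhs \<longleftrightarrow> ?rhs")
proof
  assume ?lhs
  then obtain C where C: "x = vm_count (Switch b ts) C" "\<forall>h\<in>pms (Switch b ts). C h \<le> \<kappa> h"
    "hose_feasible N B (Switch b ts) bwf C"
    unfolding realizable_def by blast
  have "vm_count (ts ! i) (C \<circ> (#) i) \<in> realizable N B (ts ! i) (bwf \<circ> (#) i) (\<kappa> \<circ> (#) i)"
    if "i < length ts" for i
    using C(2,3) that unfolding realizable_def by (force simp: pms_Switch)
  then show ?rhs using C by (auto simp: vm_count_Switch intro!: hose_feasible_root)
next
  assume ?rhs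
  then obtain xs where x: "x = (\<Sum>i<length ts. xs i)" "hose_ok N B (bwf []) x"
    and xs: "\<forall>i<length ts. xs i \<in> realizable N B (ts ! i) (bwf \<circ> (#) i) (\<kappa> \<circ> (#) i)" by blast
  obtain Cf where Cf: "\<forall>i<length ts. xs i = vm_count (ts ! i) (Cf i) \<and>
      (\<forall>h\<in>pms (ts ! i). Cf i h \<le> \<kappa> (i # h)) \<and> hose_feasible N B (ts ! i) (bwf \<circ> (#) i) (Cf i)"
    using xs unfolding realizable_def by simp metis
  define C where "C p = (case p of [] \<Rightarrow> 0 | i # h \<Rightarrow> Cf i h)" for p
  have C_comp: "C \<circ> (#) i = Cf i" for i by (rule ext) (simp add: C_def)
  have "vm_count (Switch b ts) C = x"
    unfolding vm_count_Switch C_comp using Cf x by simp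
  moreover have "hose_feasible N B (Switch b ts) bwf C" using calculation x Cf by (simp add: C_comp)
  moreover have "\<forall>h\<in>pms (Switch b ts). C h \<le> \<kappa> h" using Cf by (auto simp: pms_Switch C_def)
  ultimately show ?lhs unfolding realizable_def by auto
qed

lemma finite_realizable: "finite (realizable N B u bwf \<kappa>)"
proof (rule finite_subset)
  show "realizable N B u bwf \<kappa> \<subseteq> {..\<Sum>h\<in>pms u. \<kappa> h}"
    by (auto simp: realizable_def vm_count_def intro!: sum_mono)
qed simp

lemma zero_realizable: "\<forall>v\<in>nodes u. 0 \<le> bwf v \<Longrightarrow> 0 < B \<Longrightarrow> 0 \<in> realizable N B u bwf \<kappa>"
  unfolding realizable_def
  by (auto simp: vm_count_def hose_feasible_iff hose_ok_0 intro!: exI[of _ "\<lambda>_. 0"])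

lemma realizable_mono: "\<forall>h\<in>pms u. \<kappa> h \<le> \<kappa>' h \<Longrightarrow> realizable N B u bwf \<kappa> \<subseteq> realizable N B u bwf \<kappa>'"
  unfolding realizable_def by (auto intro: order_trans)

lemma realizable_mono_bw:
  "\<forall>v\<in>nodes u. bwf v \<le> bwf' v \<Longrightarrow> realizable N B u bwf \<kappa> \<subseteq> realizable N B u bwf' \<kappa>"
  unfolding realizable_def using hose_feasible_mono by blast

lemma hose_ok_if_realizable: "x \<in> realizable N B u bwf \<kappa> \<Longrightarrow> hose_ok N B (bwf []) x"
  by (auto simp: realizable_def intro: hose_feasible_root)

definition max_usable :: "nat \<Rightarrow> real \<Rightarrow> stree \<Rightarrow> (nat list \<Rightarrow> nat) \<Rightarrow> nat" where
  "max_usable N B u \<kappa> = Max (realizable N B u (bw u) \<kappa>)"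

definition worst_usable :: "nat \<Rightarrow> real \<Rightarrow> stree \<Rightarrow> (nat list \<Rightarrow> nat) \<Rightarrow> nat" where
  "worst_usable N B u \<kappa> = Min ((\<lambda>F. max_usable N B u (\<kappa>(F := 0))) ` pms u)"

lemma le_max_usable: "x \<in> realizable N B u (bw u) \<kappa> \<Longrightarrow> x \<le> max_usable N B u \<kappa>"
  by (simp add: max_usable_def finite_realizable)

lemma max_usable_realizable:
  "wf_tree u \<Longrightarrow> 0 < B \<Longrightarrow> max_usable N B u \<kappa> \<in> realizable N B u (bw u) \<kappa>"
proof -
  assume "wf_tree u" "0 < B"
  then have "0 \<in> realizable N B u (bw u) \<kappa>" by (simp add: zero_realizable wf_tree_bw_nonneg)
  then show ?thesis unfolding max_usable_def using finite_realizable by (intro Max_in) auto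
qed

lemma max_usable_mono:
  "wf_tree u \<Longrightarrow> 0 < B \<Longrightarrow> \<forall>h\<in>pms u. \<kappa> h \<le> \<kappa>' h \<Longrightarrow> max_usable N B u \<kappa> \<le> max_usable N B u \<kappa>'"
  using max_usable_realizable realizable_mono le_max_usable by blast

lemma worst_usable_le: "F \<in> pms u \<Longrightarrow> worst_usable N B u \<kappa> \<le> max_usable N B u (\<kappa>(F := 0))"
  unfolding worst_usable_def using finite_pms by (auto intro: Min_le)

lemma worst_usable_attained:
  "wf_tree u \<Longrightarrow> \<exists>F\<in>pms u. worst_usable N B u \<kappa> = max_usable N B u (\<kappa>(F := 0))"
proof -
  assume "wf_tree u"
  then have "worst_usable N B u \<kappa> \<in> (\<lambda>F. max_usable N B u (\<kappa>(F := 0))) ` pms u"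
    unfolding worst_usable_def using pms_nonempty finite_pms by (intro Min_in) auto
  then show ?thesis by auto
qed

lemma worst_usable_le_max_usable:
  assumes "wf_tree u" "0 < B"
  shows "worst_usable N B u \<kappa> \<le> max_usable N B u \<kappa>"
proof -
  obtain F where "F \<in> pms u" using pms_nonempty[OF assms(1)] by blast
  then have "worst_usable N B u \<kappa> \<le> max_usable N B u (\<kappa>(F := 0))" by (rule worst_usable_le)
  also have "\<dots> \<le> max_usable N B u \<kappa>" by (rule max_usable_mono[OF assms]) auto
  finally show ?thesis .
qed

lemma hose_ok_max_usable:
  "wf_tree u \<Longrightarrow> 0 < B \<Longrightarrow> hose_ok N B (bw_of u) (max_usable N B u \<kappa>)"
  using hose_ok_if_realizable max_usable_realizable by fastforce

lemma hose_ok_worst_usable: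
  "wf_tree u \<Longrightarrow> 0 < B \<Longrightarrow> hose_ok N B (bw_of u) (worst_usable N B u \<kappa>)"
proof -
  assume "wf_tree u" "0 < B"
  then obtain F where "worst_usable N B u \<kappa> = max_usable N B u (\<kappa>(F := 0))"
    using worst_usable_attained by blast
  then show ?thesis using hose_ok_max_usable[OF \<open>wf_tree u\<close> \<open>0 < B\<close>] by simp
qed

lemma max_usable_PM_le: "0 \<le> b \<Longrightarrow> 0 < B \<Longrightarrow> max_usable N B (PM c b) \<kappa> \<le> \<kappa> []"
  using max_usable_realizable[of "PM c b" B N \<kappa>] by (simp add: realizable_PM)

lemma max_usable_Switch_le:
  assumes "wf_tree (Switch b ts)" "0 < B"
    and "\<And>xs. \<forall>i<length ts. xs i \<in> realizable N B (ts ! i) (bw (ts ! i)) (\<kappa> \<circ> (#) i) \<Longrightarrow>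
           (\<Sum>i<length ts. xs i) \<le> X"
  shows "max_usable N B (Switch b ts) \<kappa> \<le> X"
  using max_usable_realizable[OF assms(1,2), of N \<kappa>] assms(3)
  unfolding realizable_Switch bw_Switch_comp_Cons by auto

text \<open>A single failure hits exactly one child: if child i offers A i working VMs without
  and f i under a failure inside it, then the first k children guarantee fail_count A f k
  under any failure among them.\<close>
fun fail_count :: "(nat \<Rightarrow> nat) \<Rightarrow> (nat \<Rightarrow> nat) \<Rightarrow> nat \<Rightarrow> nat" where
  "fail_count A f 0 = 0"
| "fail_count A f (Suc k) = min (fail_count A f k + A k) ((\<Sum>i<k. A i) + f k)"

lemma fail_count_attained:
  "0 < k \<Longrightarrow> \<forall>i<k. f i \<le> A i \<Longrightarrow> \<exists>j<k. fail_count A f k + A j = (\<Sum>i<k. A i) + f j"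
proof (induction k)
  case (Suc k)
  show ?case
  proof (cases "k = 0")
    case False
    then obtain j where j: "j < k" "fail_count A f k + A j = (\<Sum>i<k. A i) + f j"
      using Suc by auto
    then show ?thesis
      by (cases "fail_count A f k + A k \<le> (\<Sum>i<k. A i) + f k") (auto intro: exI[of _ j] exI[of _ k])
  qed (use Suc.prems in auto)
qed simp

lemma partial_le_fail_count:
  assumes "k \<le> length ts"
    and "\<forall>i<k. dp N B (ts ! i) (min N (A i)) (min N (f i)) \<le> enat (c i)"
    and "\<forall>i<k. f i \<le> A i"
  shows "partial N B ts k (min N (\<Sum>i<k. A i)) (min N (fail_count A f k)) \<le> enat (\<Sum>i<k. c i)"
  using assms
proof (induction k)
  case 0 then show ?case by (simp add: init_tbl_def zero_enat_def)
next
  case (Suc k)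
  have k: "k < length ts" using Suc.prems by simp
  have "partial N B ts (Suc k) (min N (\<Sum>i<Suc k. A i)) (min N (fail_count A f (Suc k)))
        \<le> partial N B ts k (min N (\<Sum>i<k. A i)) (min N (fail_count A f k))
           + dp N B (ts ! k) (min N (A k)) (min N (f k))"
    unfolding partial_Suc[OF k] by (rule combine_le) (auto simp: min_def)
  also have "\<dots> \<le> enat (\<Sum>i<k. c i) + enat (c k)"
    using Suc by (intro add_mono) auto
  finally show ?case by simp
qed

lemma sum_fun_upd_add:
  fixes g :: "nat \<Rightarrow> nat"
  assumes "j < d"
  shows "(\<Sum>i<d. (g(j := y)) i) + g j = (\<Sum>i<d. g i) + y"
  using assms by (simp add: sum.remove[of "{..<d}" j])

lemma partial_le_children_allocation:
  assumes children: "\<forall>i<length ts. wf_tree (ts ! i)" "ts \<noteq> []" and B: "0 < B"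
    and cap: "\<forall>i<length ts. \<forall>h\<in>pms (ts ! i). \<kappa> (i # h) \<le> cap (ts ! i) h"
    and dp_le: "\<And>i \<kappa>'. i < length ts \<Longrightarrow> \<forall>h\<in>pms (ts ! i). \<kappa>' h \<le> cap (ts ! i) h \<Longrightarrow>
        dp N B (ts ! i) (min N (max_usable N B (ts ! i) \<kappa>')) (min N (worst_usable N B (ts ! i) \<kappa>'))
          \<le> enat (\<Sum>h\<in>pms (ts ! i). \<kappa>' h)"
  obtains j h X Y where "j < length ts" "h \<in> pms (ts ! j)"
    "partial N B ts (length ts) (min N X) (min N Y)
       \<le> enat (\<Sum>i<length ts. \<Sum>h\<in>pms (ts ! i). \<kappa> (i # h))"
    "\<And>xs. \<forall>i<length ts. xs i \<in> realizable N B (ts ! i) (bw (ts ! i)) (\<kappa> \<circ> (#) i) \<Longrightarrow>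
       (\<Sum>i<length ts. xs i) \<le> X"
    "\<And>xs. \<forall>i<length ts. xs i \<in> realizable N B (ts ! i) (bw (ts ! i)) (\<kappa>((j # h) := 0) \<circ> (#) i) \<Longrightarrow>
       (\<Sum>i<length ts. xs i) \<le> Y"
proof -
  let ?d = "length ts"
  define A where "A i = max_usable N B (ts ! i) (\<kappa> \<circ> (#) i)" for i
  define f where "f i = worst_usable N B (ts ! i) (\<kappa> \<circ> (#) i)" for i
  have fA: "\<forall>i<?d. f i \<le> A i"
    using worst_usable_le_max_usable children B unfolding A_def f_def by auto
  have "dp N B (ts ! i) (min N (A i)) (min N (f i)) \<le> enat (\<Sum>h\<in>pms (ts ! i). \<kappa> (i # h))"
    if "i < ?d" for i
    using dp_le[of i "\<kappa> \<circ> (#) i"] cap that unfolding A_def f_def by simp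
  then have "partial N B ts ?d (min N (\<Sum>i<?d. A i)) (min N (fail_count A f ?d))
     \<le> enat (\<Sum>i<?d. \<Sum>h\<in>pms (ts ! i). \<kappa> (i # h))"
    using fA by (intro partial_le_fail_count) auto
  moreover obtain j where j: "j < ?d" "fail_count A f ?d + A j = (\<Sum>i<?d. A i) + f j"
    using fail_count_attained[of ?d f A] fA children(2) by auto
  moreover obtain h where h: "h \<in> pms (ts ! j)"
    "f j = max_usable N B (ts ! j) ((\<kappa> \<circ> (#) j)(h := 0))"
    using worst_usable_attained children j unfolding f_def by blast
  moreover have "(\<Sum>i<?d. xs i) \<le> (\<Sum>i<?d. A i)"
    if "\<forall>i<?d. xs i \<in> realizable N B (ts ! i) (bw (ts ! i)) (\<kappa> \<circ> (#) i)" for xs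
    using that unfolding A_def by (auto intro!: sum_mono le_max_usable)
  moreover have "(\<Sum>i<?d. xs i) \<le> fail_count A f ?d"
    if xs: "\<forall>i<?d. xs i \<in> realizable N B (ts ! i) (bw (ts ! i)) (\<kappa>((j # h) := 0) \<circ> (#) i)" for xs
  proof -
    have "xs i \<le> (A(j := f j)) i" if i: "i < ?d" for i
    proof -
      have eq: "\<kappa>((j # h) := 0) \<circ> (#) i = (if i = j then (\<kappa> \<circ> (#) i)(h := 0) else \<kappa> \<circ> (#) i)"
        by (rule ext) auto
      have "xs i \<in> realizable N B (ts ! i) (bw (ts ! i)) (\<kappa>((j # h) := 0) \<circ> (#) i)"
        using xs i by blast
      then show ?thesis unfolding eq A_def h(2) by (cases "i = j") (auto intro: le_max_usable)
    qed
    then have "(\<Sum>i<?d. xs i) \<le> (\<Sum>i<?d. (A(j := f j)) i)"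
      by (intro sum_mono) simp
    then show ?thesis using sum_fun_upd_add[OF j(1), of A "f j"] j(2) by simp
  qed
  ultimately show thesis using that by blast
qed

lemma dp_PM_le_allocation:
  assumes b: "0 \<le> b" and B: "0 < B" and c: "\<kappa> [] \<le> c"
  shows "dp N B (PM c b) (min N (max_usable N B (PM c b) \<kappa>)) (min N (worst_usable N B (PM c b) \<kappa>))
           \<le> enat (\<kappa> [])"
proof -
  let ?A = "max_usable N B (PM c b) \<kappa>"
  have "worst_usable N B (PM c b) \<kappa> \<le> max_usable N B (PM c b) (\<kappa>([] := 0))"
    by (rule worst_usable_le) (simp add: pms_PM)
  also have "\<dots> \<le> 0" using max_usable_PM_le[OF b B] by (metis fun_upd_same)
  finally have no_failure: "worst_usable N B (PM c b) \<kappa> = 0" by simp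
  have "?A \<le> \<kappa> []" by (rule max_usable_PM_le[OF b B])
  then have "min N ?A \<le> \<kappa> []" by simp
  moreover have "inLam N B b (min N ?A)"
    using inLam_min_if_hose_ok[OF B b] hose_ok_max_usable[of "PM c b" B N \<kappa>] b B by simp
  ultimately show ?thesis using c by (auto simp: no_failure leaf_tbl_def)
qed

lemma dp_le_allocation:
  assumes "wf_tree u" "0 < B" "\<forall>h\<in>pms u. \<kappa> h \<le> cap u h"
  shows "dp N B u (min N (max_usable N B u \<kappa>)) (min N (worst_usable N B u \<kappa>))
           \<le> enat (\<Sum>h\<in>pms u. \<kappa> h)"
  using assms
proof (induction u arbitrary: \<kappa>)
  case (PM c b)
  then show ?case using dp_PM_le_allocation by (simp add: pms_PM cap_def)
next
  case (Switch b ts)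
  have children: "\<forall>i<length ts. wf_tree (ts ! i)" "ts \<noteq> []" and b: "0 \<le> b"
    using Switch.prems(1) by (auto simp: nth_mem)
  have cap: "\<forall>i<length ts. \<forall>h\<in>pms (ts ! i). \<kappa> (i # h) \<le> cap (ts ! i) h"
    using Switch.prems(3) by (auto simp: pms_Switch)
  obtain j h X Y where F: "j < length ts" "h \<in> pms (ts ! j)"
    and partial_le: "partial N B ts (length ts) (min N X) (min N Y)
       \<le> enat (\<Sum>i<length ts. \<Sum>h\<in>pms (ts ! i). \<kappa> (i # h))"
    and X: "\<And>xs. \<forall>i<length ts. xs i \<in> realizable N B (ts ! i) (bw (ts ! i)) (\<kappa> \<circ> (#) i) \<Longrightarrow>
       (\<Sum>i<length ts. xs i) \<le> X"
    and Y: "\<And>xs. \<forall>i<length ts. xs i \<in> realizable N B (ts ! i) (bw (ts ! i)) (\<kappa>((j # h) := 0) \<circ> (#) i) \<Longrightarrow>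
       (\<Sum>i<length ts. xs i) \<le> Y"
    using partial_le_children_allocation[OF children Switch.prems(2) cap]
      Switch.IH[OF nth_mem] children(1) Switch.prems(2) by blast
  let ?A = "max_usable N B (Switch b ts) \<kappa>"
  let ?f = "worst_usable N B (Switch b ts) \<kappa>"
  have "?A \<le> X" by (rule max_usable_Switch_le[OF Switch.prems(1,2) X])
  moreover have "?f \<le> Y"
  proof -
    have "j # h \<in> pms (Switch b ts)" using F by (auto simp: pms_Switch)
    then have "?f \<le> max_usable N B (Switch b ts) (\<kappa>((j # h) := 0))" by (rule worst_usable_le)
    also have "\<dots> \<le> Y" by (rule max_usable_Switch_le[OF Switch.prems(1,2) Y])
    finally show ?thesis .
  qed
  moreover have "mv N B b (min N ?A) = min N ?A" "mv N B b (min N ?f) = min N ?f"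
    using hose_ok_max_usable[OF Switch.prems(1,2)] hose_ok_worst_usable[OF Switch.prems(1,2)]
      mv_min_if_hose_ok[OF Switch.prems(2) b] by simp_all
  ultimately have "dp N B (Switch b ts) (min N ?A) (min N ?f) \<le> partial N B ts (length ts) (min N X) (min N Y)"
    using children(2) unfolding dp_Switch by (auto intro!: partial_mono)
  then show ?case using partial_le by (simp add: sum_pms_Switch)
qed

lemma svce_children_realizable:
  assumes wf: "wf_substrate t" and t: "t = Switch b ts" and B: "0 < B"
    and svce: "is_svce N B t Cs Bs" and F: "F \<in> pms t"
  obtains xs where "N = (\<Sum>i<length ts. xs i)"
    "\<forall>i<length ts. xs i \<in> realizable N B (ts ! i) (bw (ts ! i)) (Cs(F := 0) \<circ> (#) i)"
proof -
  have Bs: "\<forall>v\<in>nodes t - {[]}. 0 \<le> Bs v \<and> Bs v \<le> bw t v" using svce by (simp add: is_svce_def)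
  moreover have "F \<in> nodes t - {[]}" using F pms_subset_nodes wf_substrate_pms_nonroot[OF wf F] by blast
  moreover obtain C where "vce N B (pms t - {F}) (nodes t - {[], F}) Cs Bs C"
    using svce F unfolding is_svce_def by blast
  ultimately have "N \<in> realizable N B t (Bs([] := real N * B)) (Cs(F := 0))"
    using realizable_if_vce_after_failure[OF F B] by blast
  moreover have "\<forall>v\<in>nodes t. (Bs([] := real N * B)) v \<le> ((bw t)([] := real N * B)) v"
    using Bs by simp
  ultimately have "N \<in> realizable N B t ((bw t)([] := real N * B)) (Cs(F := 0))"
    using realizable_mono_bw by blast
  then show thesis
    using that unfolding t realizable_Switch by (auto simp: bw_Switch_comp_Cons[symmetric] comp_def)
qed

theorem root_tbl_le_svce_cost:
  assumes wf: "wf_substrate t" and B: "0 < B" and svce: "is_svce N B t Cs Bs"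
  shows "root_tbl N B t N N \<le> enat (\<Sum>h\<in>pms t. Cs h)"
proof -
  obtain b ts where t: "t = Switch b ts" "ts \<noteq> []" and children: "\<forall>i<length ts. wf_tree (ts ! i)"
    using wf_substrate_root[OF wf] by blast
  have cap: "\<forall>i<length ts. \<forall>h\<in>pms (ts ! i). Cs (i # h) \<le> cap (ts ! i) h"
    using svce t by (auto simp: pms_Switch is_svce_def)
  obtain j h X Y where F: "j < length ts" "h \<in> pms (ts ! j)"
    and partial_le: "partial N B ts (length ts) (min N X) (min N Y)
       \<le> enat (\<Sum>i<length ts. \<Sum>h\<in>pms (ts ! i). Cs (i # h))"
    and X: "\<And>xs. \<forall>i<length ts. xs i \<in> realizable N B (ts ! i) (bw (ts ! i)) (Cs \<circ> (#) i) \<Longrightarrow>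
       (\<Sum>i<length ts. xs i) \<le> X"
    and Y: "\<And>xs. \<forall>i<length ts. xs i \<in> realizable N B (ts ! i) (bw (ts ! i)) (Cs((j # h) := 0) \<circ> (#) i) \<Longrightarrow>
       (\<Sum>i<length ts. xs i) \<le> Y"
    using partial_le_children_allocation[OF children t(2) B cap] dp_le_allocation[OF _ B] children
    by blast
  have "j # h \<in> pms t" using F t by (auto simp: pms_Switch)
  then obtain xs where xs: "N = (\<Sum>i<length ts. xs i)"
    "\<forall>i<length ts. xs i \<in> realizable N B (ts ! i) (bw (ts ! i)) (Cs((j # h) := 0) \<circ> (#) i)"
    using svce_children_realizable[OF wf t(1) B svce] by blast
  have "realizable N B (ts ! i) (bw (ts ! i)) (Cs((j # h) := 0) \<circ> (#) i)
      \<subseteq> realizable N B (ts ! i) (bw (ts ! i)) (Cs \<circ> (#) i)" for i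
    by (rule realizable_mono) auto
  then have "N \<le> X" "N \<le> Y" using X[of xs] Y[OF xs(2)] xs by auto
  then have "root_tbl N B t N N \<le> partial N B ts (length ts) (min N X) (min N Y)"
    using t by (auto intro!: partial_mono)
  then show ?thesis using partial_le t by (simp add: sum_pms_Switch)
qed


section \<open>Embeddings after a failure\<close>

lemma sum_split_bounded:
  fixes m :: "nat \<Rightarrow> nat"
  shows "x \<le> (\<Sum>i<d. m i) \<Longrightarrow> \<exists>xs. (\<forall>i<d. xs i \<le> m i) \<and> (\<Sum>i<d. xs i) = x"
proof (induction d arbitrary: x)
  case (Suc d)
  define y where "y = min x (m d)"
  have "x - y \<le> (\<Sum>i<d. m i)" using Suc.prems by (auto simp: y_def)
  then obtain xs where xs: "\<forall>i<d. xs i \<le> m i" "(\<Sum>i<d. xs i) = x - y" using Suc.IH by blast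
  have "(\<Sum>i<d. (xs(d := y)) i) = (\<Sum>i<d. xs i)" by (rule sum.cong) auto
  then show ?case using xs by (intro exI[of _ "xs(d := y)"]) (auto simp: y_def less_Suc_eq)
qed simp

text \<open>Invariant of the bottom-up construction of an embedding: a subtree that has to offer
  a working VMs can realize every count up to m and, if m < a, every count of the window
  [N - m, max a (N - m)].\<close>
definition covers :: "nat \<Rightarrow> nat \<Rightarrow> nat set \<Rightarrow> nat \<Rightarrow> bool" where
  "covers N a R m \<longleftrightarrow> m \<le> N \<and> (\<forall>x\<le>m. x \<in> R) \<and>
     (m < a \<longrightarrow> (\<forall>x. N - m \<le> x \<and> x \<le> max a (N - m) \<longrightarrow> x \<in> R))"

context
  fixes N d a0 :: nat and ms as :: "nat \<Rightarrow> nat" and Rs :: "nat \<Rightarrow> nat set" and Rv :: "nat set"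
  assumes child_covers: "\<forall>i<d. covers N (as i) (Rs i) (ms i)"
    and realize_sum: "\<And>xs. \<forall>i<d. xs i \<in> Rs i \<Longrightarrow>
       min (\<Sum>i<d. xs i) (N - (\<Sum>i<d. xs i)) \<le> min a0 (N - a0) \<Longrightarrow> (\<Sum>i<d. xs i) \<le> N \<Longrightarrow>
       (\<Sum>i<d. xs i) \<in> Rv"
begin

lemma covers_small_in:
  "x \<le> (\<Sum>i<d. ms i) \<Longrightarrow> min x (N - x) \<le> min a0 (N - a0) \<Longrightarrow> x \<le> N \<Longrightarrow> x \<in> Rv"
proof -
  assume x: "x \<le> (\<Sum>i<d. ms i)" "min x (N - x) \<le> min a0 (N - a0)" "x \<le> N"
  obtain xs where xs: "\<forall>i<d. xs i \<le> ms i" "(\<Sum>i<d. xs i) = x"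
    using sum_split_bounded[OF x(1)] by blast
  have "\<forall>i<d. xs i \<in> Rs i" using xs(1) child_covers unfolding covers_def by blast
  then show "x \<in> Rv" using realize_sum[of xs] xs(2) x(2,3) by simp
qed

lemma covers_bottleneck:
  assumes a0N: "a0 \<le> N" and j: "j < d" "ms j < as j"
    and window: "min (min a0 (N - a0)) (ms j) < a0 \<Longrightarrow>
       max a0 (N - min (min a0 (N - a0)) (ms j)) \<le> max (as j) (N - ms j) + (\<Sum>i\<in>{..<d} - {j}. ms i)"
  shows "covers N a0 Rv (min (min a0 (N - a0)) (ms j))"
proof -
  define q where "q = min a0 (N - a0)"
  define m where "m = min q (ms j)"
  define T where "T = (\<Sum>i\<in>{..<d} - {j}. ms i)"
  define \<beta> where "\<beta> = max (as j) (N - ms j)"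
  have small_in: "y \<in> Rs i" if "i < d" "y \<le> ms i" for i y
    using child_covers that unfolding covers_def by blast
  have big_in: "y \<in> Rs j" if "N - ms j \<le> y" "y \<le> \<beta>" for y
    using child_covers j that unfolding covers_def \<beta>_def by auto
  have sum_ms: "(\<Sum>i<d. ms i) = ms j + T" unfolding T_def using j(1) by (simp add: sum.remove)
  show ?thesis unfolding covers_def q_def[symmetric] m_def[symmetric]
  proof (intro conjI allI impI)
    show "m \<le> N" by (simp add: m_def q_def)
    fix x assume "x \<le> m"
    then show "x \<in> Rv" using covers_small_in[of x] sum_ms by (auto simp: m_def q_def)
  next
    fix x assume lt: "m < a0" and x: "N - m \<le> x \<and> x \<le> max a0 (N - m)"
    define y where "y = min x \<beta>"
    have "m \<le> ms j" unfolding m_def by simp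
    then have y: "N - ms j \<le> y" "y \<le> \<beta>" using x unfolding y_def \<beta>_def by auto
    have "max a0 (N - m) \<le> \<beta> + T" using window lt unfolding m_def q_def T_def \<beta>_def by blast
    then have "x \<le> \<beta> + T" using x by (meson le_trans)
    moreover have "(\<Sum>i<d. (ms(j := 0)) i) = T"
      using sum.remove[of "{..<d}" j "ms(j := 0)"] j(1) unfolding T_def by simp
    ultimately have "x - y \<le> (\<Sum>i<d. (ms(j := 0)) i)" unfolding y_def by simp
    then obtain xs where xs: "\<forall>i<d. xs i \<le> (ms(j := 0)) i" "(\<Sum>i<d. xs i) = x - y"
      using sum_split_bounded by blast
    have "xs j = 0" using xs(1) j(1) by (metis fun_upd_same le_zero_eq)
    then have "(\<Sum>i<d. (xs(j := y)) i) = x"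
      using xs(2) j(1) by (simp add: sum.remove y_def)
    moreover have "\<forall>i<d. (xs(j := y)) i \<in> Rs i" using xs(1) small_in big_in[OF y] by auto
    moreover have "x \<le> N" "min x (N - x) \<le> q" using x a0N \<open>m \<le> ms j\<close> by (auto simp: m_def)
    ultimately show "x \<in> Rv" using realize_sum[of "xs(j := y)"] by (simp add: q_def)
  qed
qed

lemma bottleneck_window_bound:
  assumes a0N: "a0 \<le> N" and a0_le: "a0 \<le> (\<Sum>i<d. as i)"
    and j: "j < d" "ms j < as j" and j_min: "\<And>i. i < d \<Longrightarrow> ms i < as i \<Longrightarrow> ms j \<le> ms i"
    and lt: "min (min a0 (N - a0)) (ms j) < a0"
  shows "max a0 (N - min (min a0 (N - a0)) (ms j)) \<le> max (as j) (N - ms j) + (\<Sum>i\<in>{..<d} - {j}. ms i)"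
proof (cases "\<exists>i<d. i \<noteq> j \<and> ms i < as i")
  case True
  then obtain i where i: "i < d" "i \<noteq> j" "ms i < as i" by blast
  then have "ms i \<le> (\<Sum>i\<in>{..<d} - {j}. ms i)" by (intro member_le_sum) auto
  then show ?thesis using j_min[OF i(1,3)] a0N by auto
next
  case False
  then have "as i \<le> ms i" if "i \<in> {..<d} - {j}" for i
    using False that not_less by blast
  then have "(\<Sum>i\<in>{..<d} - {j}. as i) \<le> (\<Sum>i\<in>{..<d} - {j}. ms i)"
    by (rule sum_mono)
  moreover have "a0 \<le> as j + (\<Sum>i\<in>{..<d} - {j}. as i)"
    using a0_le j(1) by (simp add: sum.remove)
  ultimately have "a0 \<le> max (as j) (N - ms j) + (\<Sum>i\<in>{..<d} - {j}. ms i)" by linarith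
  moreover have "N - min (min a0 (N - a0)) (ms j) \<le> max (as j) (N - ms j) \<or>
      N - min (min a0 (N - a0)) (ms j) = a0"
    using lt a0N by (auto simp: min_def split: if_splits)
  ultimately show ?thesis by auto
qed

lemma covers_combine:
  assumes a0N: "a0 \<le> N" and a0_le: "a0 \<le> (\<Sum>i<d. as i)"
  shows "\<exists>m. covers N a0 Rv m"
proof (cases "(\<forall>i<d. as i \<le> ms i) \<or> a0 \<le> min (min a0 (N - a0)) (\<Sum>i<d. ms i)")
  case True
  define q where "q = min a0 (N - a0)"
  define m where "m = min q (\<Sum>i<d. ms i)"
  have "covers N a0 Rv m"
    unfolding covers_def
  proof (intro conjI allI impI)
    show "m \<le> N" by (simp add: m_def q_def)
    fix x assume "x \<le> m"
    then show "x \<in> Rv" using covers_small_in[of x] by (auto simp: m_def q_def)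
  next
    fix x assume lt: "m < a0" and x: "N - m \<le> x \<and> x \<le> max a0 (N - m)"
    then have "(\<Sum>i<d. as i) \<le> (\<Sum>i<d. ms i)" using True by (auto simp: m_def q_def intro!: sum_mono)
    then have "m = q" "q < a0" using lt a0_le by (auto simp: m_def)
    then have "x = a0" using x a0N by (auto simp: q_def min_def split: if_splits)
    then show "x \<in> Rv" using covers_small_in[of a0] a0N a0_le \<open>(\<Sum>i<d. as i) \<le> (\<Sum>i<d. ms i)\<close>
      by auto
  qed
  then show ?thesis by blast
next
  case False
  define bottlenecks where "bottlenecks = {i. i < d \<and> ms i < as i}"
  have "bottlenecks \<noteq> {}" "finite bottlenecks"
    using False by (auto simp: bottlenecks_def not_le)
  then have "Min (ms ` bottlenecks) \<in> ms ` bottlenecks" by (intro Min_in) auto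
  then obtain j where "j \<in> bottlenecks" "ms j = Min (ms ` bottlenecks)" by (auto simp: image_iff)
  then have j: "j < d" "ms j < as j" and j_min: "\<And>i. i < d \<Longrightarrow> ms i < as i \<Longrightarrow> ms j \<le> ms i"
    using \<open>finite bottlenecks\<close> by (auto simp: bottlenecks_def)
  show ?thesis
    using covers_bottleneck[OF a0N j bottleneck_window_bound[OF a0N a0_le j j_min]] by blast
qed

end

definition targets_fit :: "nat \<Rightarrow> real \<Rightarrow> stree \<Rightarrow> (nat list \<Rightarrow> real) \<Rightarrow> (nat list \<Rightarrow> nat) \<Rightarrow>
    (nat list \<Rightarrow> nat) \<Rightarrow> bool" where
  "targets_fit N B u bwf \<kappa> \<alpha> \<longleftrightarrow> (\<forall>v\<in>nodes u. \<alpha> v \<le> N) \<and> (\<forall>h\<in>pms u. \<alpha> h \<le> \<kappa> h) \<and>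
     (\<forall>v\<in>nodes u. \<forall>b ts. subtree u v = Switch b ts \<longrightarrow> \<alpha> v \<le> (\<Sum>i<length ts. \<alpha> (v @ [i]))) \<and>
     (\<forall>v\<in>nodes u. \<forall>x\<le>N. min x (N - x) \<le> min (\<alpha> v) (N - \<alpha> v) \<longrightarrow> hose_ok N B (bwf v) x)"

lemma targets_fit_child:
  assumes fit: "targets_fit N B (Switch b ts) bwf \<kappa> \<alpha>" and i: "i < length ts"
  shows "targets_fit N B (ts ! i) (bwf \<circ> (#) i) (\<kappa> \<circ> (#) i) (\<alpha> \<circ> (#) i)"
proof -
  have nodes: "\<And>v. v \<in> nodes (ts ! i) \<Longrightarrow> i # v \<in> nodes (Switch b ts)"
    and pms: "\<And>h. h \<in> pms (ts ! i) \<Longrightarrow> i # h \<in> pms (Switch b ts)"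
    using i by (auto simp: nodes_Switch pms_Switch)
  have "\<forall>v\<in>nodes (ts ! i). \<forall>b ts'. subtree (ts ! i) v = Switch b ts' \<longrightarrow>
      (\<alpha> \<circ> (#) i) v \<le> (\<Sum>k<length ts'. (\<alpha> \<circ> (#) i) (v @ [k]))"
    using fit nodes unfolding targets_fit_def by fastforce
  then show ?thesis using fit nodes pms unfolding targets_fit_def by auto
qed

lemma realizable_covers:
  "targets_fit N B u bwf \<kappa> \<alpha> \<Longrightarrow> \<exists>m. covers N (\<alpha> []) (realizable N B u bwf \<kappa>) m"
proof (induction u arbitrary: \<alpha> \<kappa> bwf)
  case (PM c b)
  define q where "q = min (\<alpha> []) (N - \<alpha> [])"
  have hose: "\<And>x. x \<le> N \<Longrightarrow> min x (N - x) \<le> q \<Longrightarrow> hose_ok N B (bwf []) x"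
    using PM.prems unfolding q_def targets_fit_def by (auto simp: nodes_PM)
  have a: "\<alpha> [] \<le> \<kappa> []" "\<alpha> [] \<le> N"
    using PM.prems by (auto simp: nodes_PM pms_PM targets_fit_def)
  have "covers N (\<alpha> []) (realizable N B (PM c b) bwf \<kappa>) (min q (\<kappa> []))"
    unfolding covers_def realizable_PM
  proof (intro conjI allI impI)
    show "min q (\<kappa> []) \<le> N" by (simp add: q_def)
    fix x assume "x \<le> min q (\<kappa> [])"
    then show "x \<in> {x. x \<le> \<kappa> [] \<and> hose_ok N B (bwf []) x}" using hose[of x] by (auto simp: q_def)
  next
    fix x assume lt: "min q (\<kappa> []) < \<alpha> []"
      and x: "N - min q (\<kappa> []) \<le> x \<and> x \<le> max (\<alpha> []) (N - min q (\<kappa> []))"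
    have "q = N - \<alpha> []" using lt a(1) by (auto simp: q_def min_def split: if_splits)
    then have "x = \<alpha> []" using x lt a by (auto simp: min_def split: if_splits)
    then show "x \<in> {x. x \<le> \<kappa> [] \<and> hose_ok N B (bwf []) x}" using hose[of x] a by (auto simp: q_def)
  qed
  then show ?case by blast
next
  case (Switch b ts)
  let ?d = "length ts"
  have "\<exists>m. covers N (\<alpha> [i]) (realizable N B (ts ! i) (bwf \<circ> (#) i) (\<kappa> \<circ> (#) i)) m"
    if i: "i < ?d" for i
    using Switch.IH[OF nth_mem[OF i] targets_fit_child[OF Switch.prems i]] by (simp add: comp_def)
  then obtain ms where ms: "\<forall>i<?d. covers N (\<alpha> [i]) (realizable N B (ts ! i) (bwf \<circ> (#) i) (\<kappa> \<circ> (#) i)) (ms i)"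
    by metis
  have root: "[] \<in> nodes (Switch b ts)" by (simp add: nodes_def)
  show ?case
  proof (rule covers_combine[OF ms])
    show "\<alpha> [] \<le> N" "\<alpha> [] \<le> (\<Sum>i<?d. \<alpha> [i])" using Switch.prems root unfolding targets_fit_def by fastforce+
    fix xs assume xs: "\<forall>i<?d. xs i \<in> realizable N B (ts ! i) (bwf \<circ> (#) i) (\<kappa> \<circ> (#) i)"
      and "min (\<Sum>i<?d. xs i) (N - (\<Sum>i<?d. xs i)) \<le> min (\<alpha> []) (N - \<alpha> [])" "(\<Sum>i<?d. xs i) \<le> N"
    then have "hose_ok N B (bwf []) (\<Sum>i<?d. xs i)" using Switch.prems root unfolding targets_fit_def by blast
    then show "(\<Sum>i<?d. xs i) \<in> realizable N B (Switch b ts) bwf \<kappa>"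
      using xs realizable_Switch by blast
  qed
qed


section \<open>Backtracking\<close>

text \<open>A chain of minimizing choices through the tables N'_v[.,.,j] of a switch with children
  ts, read backwards from N'_v[e,k]: the table N'_v[.,.,j] is looked up at cs j and child j
  is asked for the pair ct j.\<close>
definition is_chain :: "nat \<Rightarrow> real \<Rightarrow> stree list \<Rightarrow> nat \<Rightarrow> nat \<times> nat \<Rightarrow>
    (nat \<Rightarrow> nat \<times> nat) \<Rightarrow> (nat \<Rightarrow> nat \<times> nat) \<Rightarrow> bool" where
  "is_chain N B ts k e cs ct \<longleftrightarrow> cs k = e \<and>
     (\<forall>j<k. fst (cs j) \<le> N \<and> snd (cs j) \<le> N \<and> fst (ct j) \<le> N \<and> snd (ct j) \<le> N \<and>
        fst (cs (Suc j)) \<le> fst (cs j) + fst (ct j) \<and>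
        snd (cs (Suc j)) \<le> min (fst (cs j) + snd (ct j)) (fst (ct j) + snd (cs j)) \<and>
        partial N B ts j (fst (cs j)) (snd (cs j)) + dp N B (ts ! j) (fst (ct j)) (snd (ct j))
          = partial N B ts (Suc j) (fst (cs (Suc j))) (snd (cs (Suc j))))"

lemma bt_run_iff_chains:
  "bt_run N B t tg st \<longleftrightarrow> tg [] = (N, N) \<and>
     (\<forall>p\<in>nodes t. \<forall>b ts. subtree t p = Switch b ts \<longrightarrow>
        is_chain N B ts (length ts) (eff N B t p (tg p)) (st p) (\<lambda>k. tg (p @ [k])))"
  unfolding bt_run_def is_chain_def by simp

lemma sum_telescope_enat:
  fixes P Q :: "nat \<Rightarrow> enat"
  shows "\<forall>k<d. P k + Q k = P (Suc k) \<Longrightarrow> P d = P 0 + (\<Sum>k<d. Q k)"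
  by (induction d) (auto simp: add.assoc)

lemma sum_enat: "(\<Sum>i\<in>A. enat (f i)) = enat (sum f A)"
  by (induction A rule: infinite_finite_induct) (auto simp: zero_enat_def)

lemma sum_enat_finiteD:
  "finite A \<Longrightarrow> (\<Sum>i\<in>A. g i) \<noteq> (\<infinity>::enat) \<Longrightarrow> i \<in> A \<Longrightarrow> g i \<noteq> \<infinity>"
  by (induction A rule: finite_induct) (auto simp: plus_eq_infty_iff_enat)

lemma is_chain_partial:
  assumes chain: "is_chain N B ts k e cs ct" and fin: "partial N B ts k (fst e) (snd e) \<noteq> \<infinity>"
  shows "cs 0 = (0, 0) \<and>
    partial N B ts k (fst e) (snd e) = (\<Sum>j<k. dp N B (ts ! j) (fst (ct j)) (snd (ct j)))"
proof -
  let ?P = "\<lambda>j. partial N B ts j (fst (cs j)) (snd (cs j))"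
  have sum: "?P k = ?P 0 + (\<Sum>j<k. dp N B (ts ! j) (fst (ct j)) (snd (ct j)))"
    by (rule sum_telescope_enat) (use chain in \<open>simp add: is_chain_def\<close>)
  moreover have end_e: "?P k = partial N B ts k (fst e) (snd e)" using chain by (simp add: is_chain_def)
  ultimately have "?P 0 \<noteq> \<infinity>" using fin by (simp add: plus_eq_infty_iff_enat)
  then have "cs 0 = (0, 0)" "?P 0 = 0" by (auto simp: init_tbl_def prod_eq_iff split: if_splits)
  then show ?thesis using sum end_e by simp
qed

lemma is_chain_fst_le:
  assumes chain: "is_chain N B ts k e cs ct" and start: "cs 0 = (0, 0)"
  shows "k' \<le> k \<Longrightarrow> fst (cs k') \<le> (\<Sum>i<k'. fst (ct i))"
proof (induction k')
  case (Suc k')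
  then have "fst (cs (Suc k')) \<le> fst (cs k') + fst (ct k')" using chain by (simp add: is_chain_def)
  then show ?case using Suc by simp
qed (simp add: start)

lemma is_chain_snd_le:
  assumes chain: "is_chain N B ts k e cs ct" and start: "cs 0 = (0, 0)"
  shows "j < k' \<Longrightarrow> k' \<le> k \<Longrightarrow> snd (cs k') \<le> (\<Sum>i<k'. if i = j then snd (ct i) else fst (ct i))"
proof (induction k')
  case (Suc k')
  have step: "snd (cs (Suc k')) \<le> fst (cs k') + snd (ct k')"
    "snd (cs (Suc k')) \<le> fst (ct k') + snd (cs k')"
    using chain Suc.prems by (auto simp: is_chain_def)
  show ?case
  proof (cases "k' = j")
    case True
    have "(\<Sum>i<k'. fst (ct i)) = (\<Sum>i<k'. if i = j then snd (ct i) else fst (ct i))"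
      using True by (intro sum.cong) auto
    then show ?thesis
      using step(1) is_chain_fst_le[OF chain start, of k'] Suc.prems True by simp
  next
    case False
    then show ?thesis using step(2) Suc by simp
  qed
qed simp

lemma is_chain_exists:
  "k \<le> length ts \<Longrightarrow> fst e \<le> N \<Longrightarrow> snd e \<le> N \<Longrightarrow> partial N B ts k (fst e) (snd e) \<noteq> \<infinity> \<Longrightarrow>
   \<exists>cs ct. is_chain N B ts k e cs ct"
proof (induction k arbitrary: e)
  case 0
  show ?case by (rule exI[of _ "\<lambda>_. e"]) (simp add: is_chain_def)
next
  case (Suc k)
  have k: "k < length ts" using Suc.prems by simp
  obtain a0 a1 b0 b1 where ab: "a0 \<le> N" "a1 \<le> N" "b0 \<le> N" "b1 \<le> N" "fst e \<le> a0 + b0"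
    "snd e \<le> min (a0 + b1) (b0 + a1)"
    and "combine N (partial N B ts k) (dp N B (ts ! k)) (fst e) (snd e)
      = partial N B ts k a0 a1 + dp N B (ts ! k) b0 b1"
    by (rule combine_attained[OF Suc.prems(2,3)])
  then have eq: "partial N B ts (Suc k) (fst e) (snd e) = partial N B ts k a0 a1 + dp N B (ts ! k) b0 b1"
    by (simp add: partial_Suc[OF k])
  then have "partial N B ts k a0 a1 \<noteq> \<infinity>" using Suc.prems(4) by (simp add: plus_eq_infty_iff_enat)
  then obtain cs ct where chain: "is_chain N B ts k (a0, a1) cs ct"
    using Suc.IH[of "(a0, a1)"] k ab by auto
  let ?cs = "cs(Suc k := e)" and ?ct = "ct(k := (b0, b1))"
  have "fst (?cs j) \<le> N \<and> snd (?cs j) \<le> N \<and> fst (?ct j) \<le> N \<and> snd (?ct j) \<le> N \<and>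
      fst (?cs (Suc j)) \<le> fst (?cs j) + fst (?ct j) \<and>
      snd (?cs (Suc j)) \<le> min (fst (?cs j) + snd (?ct j)) (fst (?ct j) + snd (?cs j)) \<and>
      partial N B ts j (fst (?cs j)) (snd (?cs j)) + dp N B (ts ! j) (fst (?ct j)) (snd (?ct j))
        = partial N B ts (Suc j) (fst (?cs (Suc j))) (snd (?cs (Suc j)))" if j: "j < Suc k" for j
  proof (cases "j = k")
    case True
    have "cs k = (a0, a1)" using chain by (simp add: is_chain_def)
    then show ?thesis using True ab eq by simp
  next
    case False
    then show ?thesis using chain j unfolding is_chain_def by auto
  qed
  then have "is_chain N B ts (Suc k) e ?cs ?ct" unfolding is_chain_def by simp
  then show ?case by blast
qed

definition choose_chain :: "nat \<Rightarrow> real \<Rightarrow> stree list \<Rightarrow> nat \<times> nat \<Rightarrow>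
    (nat \<Rightarrow> nat \<times> nat) \<times> (nat \<Rightarrow> nat \<times> nat)" where
  "choose_chain N B ts e = (SOME x. is_chain N B ts (length ts) e (fst x) (snd x))"

lemma choose_chain:
  assumes "fst e \<le> N" "snd e \<le> N" "partial N B ts (length ts) (fst e) (snd e) \<noteq> \<infinity>"
  shows "is_chain N B ts (length ts) e (fst (choose_chain N B ts e)) (snd (choose_chain N B ts e))"
proof -
  have "\<exists>x. is_chain N B ts (length ts) e (fst x) (snd x)"
    using is_chain_exists[OF order_refl assms] by auto
  from someI_ex[OF this] show ?thesis unfolding choose_chain_def .
qed

fun targets_below :: "nat \<Rightarrow> real \<Rightarrow> stree \<Rightarrow> nat \<times> nat \<Rightarrow> nat list \<Rightarrow> nat \<times> nat" where
  "targets_below N B u x [] = x"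
| "targets_below N B (PM c b) x (i # p) = x"
| "targets_below N B (Switch b ts) x (i # p) =
     targets_below N B (ts ! i) (snd (choose_chain N B ts (mv N B b (fst x), mv N B b (snd x))) i) p"

text \<open>The pairs (n0, n1) that backtracking from N_r[N, N] hands to the nodes; the root
  table is looked up without the mapping m_r.\<close>
fun targets :: "nat \<Rightarrow> real \<Rightarrow> stree \<Rightarrow> nat list \<Rightarrow> nat \<times> nat" where
  "targets N B t [] = (N, N)"
| "targets N B (PM c b) (i # p) = (N, N)"
| "targets N B (Switch b ts) (i # p) = targets_below N B (ts ! i) (snd (choose_chain N B ts (N, N)) i) p"

lemma targets_below_snoc:
  "valid u p \<Longrightarrow> subtree u p = Switch b ts \<Longrightarrow> targets_below N B u x (p @ [i]) =
     snd (choose_chain N B ts (mv N B b (fst (targets_below N B u x p)),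
                               mv N B b (snd (targets_below N B u x p)))) i"
  by (induction u p arbitrary: x rule: valid.induct) auto

lemma targets_snoc:
  assumes "valid t p" "subtree t p = Switch b ts"
  shows "targets N B t (p @ [i]) = snd (choose_chain N B ts (eff N B t p (targets N B t p))) i"
proof (cases p)
  case Nil
  then show ?thesis using assms by (simp add: eff_def)
next
  case (Cons j p')
  obtain b0 ts0 where t: "t = Switch b0 ts0" using assms Cons by (cases t) auto
  have "bw t p = b" using assms by (simp add: bw_def)
  then show ?thesis using targets_below_snoc[of "ts0 ! j" p'] assms Cons t by (simp add: eff_def)
qed

fun children :: "stree \<Rightarrow> stree list" where
  "children (Switch b ts) = ts"
| "children (PM c b) = []"

locale dp_feasible =
  fixes N :: nat and B :: real and t :: stree
  assumes wf: "wf_substrate t" and B: "0 < B" and root_finite: "root_tbl N B t N N \<noteq> \<infinity>"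
begin

lemma partial_eff_finite:
  assumes p: "p \<in> nodes t" "subtree t p = Switch b ts"
    and x: "fst x \<le> N" "snd x \<le> N" "p \<noteq> [] \<Longrightarrow> dp N B (Switch b ts) (fst x) (snd x) \<noteq> \<infinity>"
    and root: "p = [] \<Longrightarrow> x = (N, N)"
  shows "fst (eff N B t p x) \<le> N \<and> snd (eff N B t p x) \<le> N \<and>
         partial N B ts (length ts) (fst (eff N B t p x)) (snd (eff N B t p x)) \<noteq> \<infinity>"
proof (cases "p = []")
  case True
  then show ?thesis using p root root_finite by (simp add: eff_def)
next
  case False
  have "bw t p = b" using p by (simp add: bw_def)
  moreover have "0 \<le> bw t p" using wf_substrate_bw_nonneg[OF wf p(1) False] .
  ultimately show ?thesis using False x mv_le[OF B]
    by (simp add: eff_def dp_Switch del: dp.simps)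
qed

lemma targets_admissible:
  "p \<in> nodes t \<Longrightarrow> fst (targets N B t p) \<le> N \<and> snd (targets N B t p) \<le> N \<and>
     (p \<noteq> [] \<longrightarrow> dp N B (subtree t p) (fst (targets N B t p)) (snd (targets N B t p)) \<noteq> \<infinity>)"
proof (induction p rule: rev_induct)
  case (snoc i p)
  obtain b ts where p: "p \<in> nodes t" "subtree t p = Switch b ts" "i < length ts"
    using nodes_snocD[OF snoc.prems] by blast
  let ?e = "eff N B t p (targets N B t p)"
  let ?ct = "snd (choose_chain N B ts ?e)"
  have "fst ?e \<le> N \<and> snd ?e \<le> N \<and> partial N B ts (length ts) (fst ?e) (snd ?e) \<noteq> \<infinity>"
    by (rule partial_eff_finite[OF p(1,2)]) (use snoc.IH p in \<open>auto simp del: targets.simps(2,3)\<close>)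
  then have e: "fst ?e \<le> N" "snd ?e \<le> N" "partial N B ts (length ts) (fst ?e) (snd ?e) \<noteq> \<infinity>"
    by auto
  note chain = choose_chain[OF e]
  have "(\<Sum>k<length ts. dp N B (ts ! k) (fst (?ct k)) (snd (?ct k))) \<noteq> \<infinity>"
    using is_chain_partial[OF chain e(3)] e(3) by simp
  then have "dp N B (ts ! i) (fst (?ct i)) (snd (?ct i)) \<noteq> \<infinity>"
    using sum_enat_finiteD[of "{..<length ts}" "\<lambda>k. dp N B (ts ! k) (fst (?ct k)) (snd (?ct k))" i] p(3)
    by simp
  moreover have "fst (?ct i) \<le> N" "snd (?ct i) \<le> N" using chain p(3) by (auto simp: is_chain_def)
  moreover have "targets N B t (p @ [i]) = ?ct i"
    using targets_snoc[of t p b ts N B i] p(1,2) by (simp add: nodes_def)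
  moreover have "subtree t (p @ [i]) = ts ! i" using nodes_snoc[OF p] by blast
  ultimately show ?case by (simp del: targets.simps)
qed simp

definition chain_states :: "nat list \<Rightarrow> nat \<Rightarrow> nat \<times> nat" where
  "chain_states p = fst (choose_chain N B (children (subtree t p)) (eff N B t p (targets N B t p)))"

lemma bt_run_targets: "bt_run N B t (targets N B t) chain_states"
  unfolding bt_run_iff_chains
proof (intro conjI ballI allI impI)
  fix p b ts assume p: "p \<in> nodes t" "subtree t p = Switch b ts"
  let ?e = "eff N B t p (targets N B t p)"
  have "fst ?e \<le> N \<and> snd ?e \<le> N \<and> partial N B ts (length ts) (fst ?e) (snd ?e) \<noteq> \<infinity>"
    by (rule partial_eff_finite[OF p]) (use targets_admissible[OF p(1)] p in auto)
  then have "is_chain N B ts (length ts) ?e (fst (choose_chain N B ts ?e)) (snd (choose_chain N B ts ?e))"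
    using choose_chain by blast
  moreover have "(\<lambda>k. targets N B t (p @ [k])) = snd (choose_chain N B ts ?e)"
    using targets_snoc[of t p b ts N B] p by (simp add: nodes_def fun_eq_iff del: targets.simps)
  ultimately show "is_chain N B ts (length ts) ?e (chain_states p) (\<lambda>k. targets N B t (p @ [k]))"
    using p(2) by (simp add: chain_states_def)
qed simp

lemma alg1_output_exists: "\<exists>R. alg1_output N B t R"
proof -
  let ?tg = "targets N B t"
  define Cs where "Cs h = the_enat (dp N B (subtree t h) (fst (?tg h)) (snd (?tg h)))" for h
  have "enat (Cs h) = dp N B (subtree t h) (fst (?tg h)) (snd (?tg h))" if h: "h \<in> pms t" for h
  proof -
    have "h \<in> nodes t" using h pms_subset_nodes by blast
    then have "dp N B (subtree t h) (fst (?tg h)) (snd (?tg h)) \<noteq> \<infinity>"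
      using targets_admissible wf_substrate_pms_nonroot[OF wf h] by blast
    then show ?thesis unfolding Cs_def by auto
  qed
  moreover define Bs where "Bs v = hose N B (eff N B t v (?tg v))" for v
  ultimately have "alg1_output N B t (Some (Cs, Bs))"
    unfolding alg1_output_def using root_finite bt_run_targets
    by (intro if_not_P[THEN ssubst[of _ _ "\<lambda>x. x"]] exI[of _ Cs] exI[of _ Bs] exI[of _ ?tg]
        exI[of _ chain_states]) auto
  then show ?thesis by blast
qed

end


locale backtrack = dp_feasible +
  fixes tg :: "nat list \<Rightarrow> nat \<times> nat" and st :: "nat list \<Rightarrow> nat \<Rightarrow> nat \<times> nat"
  assumes run: "bt_run N B t tg st"
begin

lemma chain:
  "p \<in> nodes t \<Longrightarrow> subtree t p = Switch b ts \<Longrightarrow>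
   is_chain N B ts (length ts) (eff N B t p (tg p)) (st p) (\<lambda>k. tg (p @ [k]))"
  using run by (simp add: bt_run_iff_chains)

lemma tg_root: "tg [] = (N, N)"
  using run by (simp add: bt_run_def)

lemma tg_le: "v \<in> nodes t \<Longrightarrow> fst (tg v) \<le> N \<and> snd (tg v) \<le> N"
proof (cases v rule: rev_cases)
  case (snoc p i)
  assume "v \<in> nodes t"
  then obtain b ts where "p \<in> nodes t" "subtree t p = Switch b ts" "i < length ts"
    using nodes_snocD snoc by blast
  then show ?thesis using chain snoc by (auto simp: is_chain_def)
qed (simp add: tg_root)

lemma eff_le: "v \<in> nodes t \<Longrightarrow> fst (eff N B t v (tg v)) \<le> N \<and> snd (eff N B t v (tg v)) \<le> N"
  using tg_le tg_root mv_le[OF B] wf_substrate_bw_nonneg[OF wf] by (auto simp: eff_def)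

lemma le_eff:
  "v \<in> nodes t \<Longrightarrow> v \<noteq> [] \<Longrightarrow> fst (tg v) \<le> fst (eff N B t v (tg v)) \<and> snd (tg v) \<le> snd (eff N B t v (tg v))"
  using le_mv[OF B] wf_substrate_bw_nonneg[OF wf] by (simp add: eff_def)

definition run_cost :: "nat list \<Rightarrow> enat" where
  "run_cost p = (if p = [] then root_tbl N B t N N else dp N B (subtree t p) (fst (tg p)) (snd (tg p)))"

lemma run_cost_Switch:
  assumes "p \<in> nodes t" "subtree t p = Switch b ts"
  shows "run_cost p = partial N B ts (length ts) (fst (eff N B t p (tg p))) (snd (eff N B t p (tg p)))"
proof (cases "p = []")
  case True
  then have "t = Switch b ts" using assms(2) by simp
  then have "root_tbl N B t N N = partial N B ts (length ts) N N" by simp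
  then show ?thesis using True tg_root by (simp add: run_cost_def eff_def)
next
  case False
  have "bw t p = b" using assms by (simp add: bw_def)
  then show ?thesis using False assms(2) by (simp add: run_cost_def eff_def dp_Switch del: dp.simps)
qed

lemma run_cost_children:
  assumes "p \<in> nodes t" "subtree t p = Switch b ts" "run_cost p \<noteq> \<infinity>"
  shows "st p 0 = (0, 0) \<and> run_cost p = (\<Sum>k<length ts. run_cost (p @ [k]))"
proof -
  have "run_cost (p @ [k]) = dp N B (ts ! k) (fst (tg (p @ [k]))) (snd (tg (p @ [k])))"
    if "k < length ts" for k
    using nodes_snoc[OF assms(1,2) that] by (simp add: run_cost_def)
  then show ?thesis
    using is_chain_partial[OF chain[OF assms(1,2)]] run_cost_Switch[OF assms(1,2)] assms(3) by simp
qed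

lemma run_cost_finite: "p \<in> nodes t \<Longrightarrow> run_cost p \<noteq> \<infinity>"
proof (induction p rule: rev_induct)
  case Nil then show ?case using root_finite by (simp add: run_cost_def)
next
  case (snoc i p)
  obtain b ts where p: "p \<in> nodes t" "subtree t p = Switch b ts" "i < length ts"
    using nodes_snocD[OF snoc.prems] by blast
  then have "(\<Sum>k<length ts. run_cost (p @ [k])) \<noteq> \<infinity>"
    using run_cost_children snoc.IH by auto
  then show ?case using p(3) sum_enat_finiteD[of "{..<length ts}" "\<lambda>k. run_cost (p @ [k])" i] by simp
qed

lemma st_0: "p \<in> nodes t \<Longrightarrow> subtree t p = Switch b ts \<Longrightarrow> st p 0 = (0, 0)"
  using run_cost_children run_cost_finite by blast

end

locale backtrack_output = backtrack +
  fixes Cs :: "nat list \<Rightarrow> nat" and Bs :: "nat list \<Rightarrow> real"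
  assumes Cs: "\<forall>h\<in>pms t. enat (Cs h) = dp N B (subtree t h) (fst (tg h)) (snd (tg h))"
    and Bs: "\<forall>v\<in>nodes t - {[]}. Bs v = hose N B (eff N B t v (tg v))"
begin

lemma Cs_pm:
  assumes h: "h \<in> pms t"
  shows "snd (tg h) = 0 \<and> Cs h = mv N B (bw t h) (fst (tg h)) \<and> Cs h \<le> cap t h"
proof -
  have h_node: "h \<in> nodes t" "h \<noteq> []"
    using h pms_subset_nodes wf_substrate_pms_nonroot[OF wf] by auto
  obtain c b where sub: "subtree t h = PM c b" using h by (cases "subtree t h") (auto simp: pms_def)
  have "leaf_tbl N B c b (fst (tg h)) (snd (tg h)) \<noteq> \<infinity>"
    using run_cost_finite[OF h_node(1)] sub h_node by (simp add: run_cost_def)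
  moreover have "0 \<le> b" "bw t h = b" "cap t h = c"
    using wf_substrate_bw_nonneg[OF wf h_node] sub by (auto simp: bw_def cap_def)
  moreover have "enat (Cs h) = leaf_tbl N B c b (fst (tg h)) (snd (tg h))" using Cs h sub by simp
  ultimately show ?thesis using leaf_tbl_finite[OF B] by fastforce
qed

lemma run_cost_eq_alloc:
  "p \<in> nodes t \<Longrightarrow> subtree t p = u \<Longrightarrow> run_cost p = enat (\<Sum>h\<in>pms u. Cs (p @ h))"
proof (induction u arbitrary: p)
  case (PM c b)
  have "p \<in> pms t" using PM by (simp add: pms_def nodes_def)
  then show ?case using Cs wf_substrate_pms_nonroot[OF wf] PM by (simp add: run_cost_def pms_PM)
next
  case (Switch b ts)
  have "run_cost p = (\<Sum>k<length ts. run_cost (p @ [k]))"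
    using run_cost_children Switch.prems run_cost_finite by blast
  also have "\<dots> = (\<Sum>k<length ts. enat (\<Sum>h\<in>pms (ts ! k). Cs ((p @ [k]) @ h)))"
  proof (rule sum.cong)
    fix k assume "k \<in> {..<length ts}"
    then have k: "k < length ts" by simp
    show "run_cost (p @ [k]) = enat (\<Sum>h\<in>pms (ts ! k). Cs ((p @ [k]) @ h))"
      using Switch.IH[OF nth_mem[OF k]] nodes_snoc[OF Switch.prems k] by blast
  qed simp
  also have "\<dots> = enat (\<Sum>h\<in>pms (Switch b ts). Cs (p @ h))"
    by (simp add: sum_pms_Switch sum_enat)
  finally show ?case .
qed

lemma total_cost: "enat (\<Sum>h\<in>pms t. Cs h) = root_tbl N B t N N"
  using run_cost_eq_alloc[of "[]" t] by (simp add: run_cost_def nodes_def)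

definition working :: "nat list \<Rightarrow> nat list \<Rightarrow> nat" where
  "working F v = (if \<exists>q. F = v @ q then snd (eff N B t v (tg v)) else fst (eff N B t v (tg v)))"

lemma working_le: "v \<in> nodes t \<Longrightarrow> working F v \<le> N"
  using eff_le by (simp add: working_def)

lemma working_pm:
  assumes F: "F \<in> pms t" and h: "h \<in> pms t"
  shows "working F h \<le> (Cs(F := 0)) h"
proof (cases "h = F")
  case True
  have "h \<in> nodes t" "h \<noteq> []" using h pms_subset_nodes wf_substrate_pms_nonroot[OF wf] by auto
  then show ?thesis
    using True Cs_pm[OF h] mv_0[OF B wf_substrate_bw_nonneg[OF wf]] by (simp add: working_def eff_def)
next
  case False
  then have "\<not> (\<exists>q. F = h @ q)" using pms_no_extension[OF h] F by (auto simp: pms_def)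
  then show ?thesis
    using False Cs_pm[OF h] wf_substrate_pms_nonroot[OF wf h] by (simp add: working_def eff_def)
qed

lemma working_Switch:
  assumes F: "F \<in> pms t" and v: "v \<in> nodes t" and sub: "subtree t v = Switch b ts"
  shows "working F v \<le> (\<Sum>i<length ts. working F (v @ [i]))"
proof -
  note chain = chain[OF v sub] and start = st_0[OF v sub]
  have st_end: "st v (length ts) = eff N B t v (tg v)" using chain by (simp add: is_chain_def)
  have le_working: "(if \<exists>q. F = (v @ [i]) @ q then snd (tg (v @ [i])) else fst (tg (v @ [i])))
      \<le> working F (v @ [i])" if "i < length ts" for i
    using le_eff[of "v @ [i]"] nodes_snoc[OF v sub that] by (simp add: working_def)
  show ?thesis
  proof (cases "\<exists>q. F = v @ q")
    case True
    then obtain j q where q: "F = v @ j # q"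
      using F sub by (metis append_Nil2 is_pm.simps(2) neq_Nil_conv pms_def mem_Collect_eq)
    then have j: "j < length ts" using F sub by (simp add: pms_def valid_append)
    have "working F v = snd (st v (length ts))" using True st_end by (simp add: working_def)
    also have "\<dots> \<le> (\<Sum>i<length ts. if i = j then snd (tg (v @ [i])) else fst (tg (v @ [i])))"
      using is_chain_snd_le[OF chain start j] by simp
    also have "\<dots> \<le> (\<Sum>i<length ts. working F (v @ [i]))"
    proof (rule sum_mono)
      fix i assume "i \<in> {..<length ts}"
      moreover have "(\<exists>q'. F = (v @ [i]) @ q') \<longleftrightarrow> i = j" using q by auto
      ultimately show "(if i = j then snd (tg (v @ [i])) else fst (tg (v @ [i]))) \<le> working F (v @ [i])"
        using le_working[of i] by simp
    qed
    finally show ?thesis .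
  next
    case False
    have "working F v = fst (st v (length ts))" using False st_end by (simp add: working_def)
    also have "\<dots> \<le> (\<Sum>i<length ts. fst (tg (v @ [i])))"
      using is_chain_fst_le[OF chain start] by simp
    also have "\<dots> \<le> (\<Sum>i<length ts. working F (v @ [i]))"
      using le_working False by (intro sum_mono) auto
    finally show ?thesis .
  qed
qed

lemma working_hose_ok:
  assumes v: "v \<in> nodes t" and x: "x \<le> N" "min x (N - x) \<le> min (working F v) (N - working F v)"
  shows "hose_ok N B ((Bs([] := real N * B)) v) x"
proof (cases "v = []")
  case True
  then show ?thesis using hose_ok_full[OF B] by simp
next
  case False
  have "hose_ok N B (hose N B (eff N B t v (tg v))) x"
    by (rule hose_ok_hose[OF B x(1) working_le[OF v] x(2)]) (simp add: working_def)
  then show ?thesis using Bs v False by simp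
qed

lemma Bs_bounds:
  assumes "v \<in> nodes t" "v \<noteq> []"
  shows "0 \<le> Bs v \<and> Bs v \<le> bw t v"
proof -
  have b: "0 \<le> bw t v" using wf_substrate_bw_nonneg[OF wf assms] .
  have "0 \<le> hose N B (eff N B t v (tg v)) \<and> hose N B (eff N B t v (tg v)) \<le> bw t v"
    by (rule hose_le_bw[OF B b]) (use eff_le[OF assms(1)] inLam_mv[OF B b] assms(2) in \<open>auto simp: eff_def\<close>)
  then show ?thesis using Bs assms by simp
qed

lemma vce_after_failure:
  assumes F: "F \<in> pms t"
  shows "\<exists>C. vce N B (pms t - {F}) (nodes t - {[], F}) Cs Bs C"
proof -
  have "targets_fit N B t (Bs([] := real N * B)) (Cs(F := 0)) (working F)"
    unfolding targets_fit_def
    using working_le working_pm[OF F] working_Switch[OF F] working_hose_ok by blast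
  then obtain m where m: "covers N (working F []) (realizable N B t (Bs([] := real N * B)) (Cs(F := 0))) m"
    using realizable_covers by blast
  moreover have "working F [] = N" using tg_root by (simp add: working_def eff_def)
  ultimately have "N \<in> realizable N B t (Bs([] := real N * B)) (Cs(F := 0))"
    by (cases "m < N") (auto simp: covers_def)
  then show ?thesis using vce_after_failure_if_realizable[OF F] by blast
qed

lemma is_svce: "is_svce N B t Cs Bs"
  unfolding is_svce_def using Cs_pm Bs_bounds vce_after_failure by blast

end

context dp_feasible
begin

lemma alg1_output_optimal:
  assumes "alg1_output N B t R"
  shows "\<exists>Cs Bs. R = Some (Cs, Bs) \<and> optimal_svce N B t Cs Bs"
proof -
  obtain Cs Bs tg st where R: "R = Some (Cs, Bs)" and "bt_run N B t tg st"
    "\<forall>h \<in> pms t. enat (Cs h) = dp N B (subtree t h) (fst (tg h)) (snd (tg h))"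
    "\<forall>v \<in> nodes t - {[]}. Bs v = hose N B (eff N B t v (tg v))"
    using assms root_finite unfolding alg1_output_def by auto
  then interpret backtrack_output N B t tg st Cs Bs by unfold_locales
  have "(\<Sum>h\<in>pms t. Cs h) \<le> (\<Sum>h\<in>pms t. Cs' h)" if "is_svce N B t Cs' Bs'" for Cs' Bs'
  proof -
    have "enat (\<Sum>h\<in>pms t. Cs h) \<le> enat (\<Sum>h\<in>pms t. Cs' h)"
      using root_tbl_le_svce_cost[OF wf B that] total_cost by simp
    then show ?thesis by simp
  qed
  then show ?thesis using R is_svce unfolding optimal_svce_def by blast
qed

end

theorem theorem1:
  fixes t :: stree and N :: nat and B :: real
  assumes "wf_substrate t" and "0 < N" and "0 < B"
  shows "(\<exists>R. alg1_output N B t R) \<and>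
         (\<forall>R. alg1_output N B t R \<longrightarrow>
            (if (\<exists>Cs Bs. is_svce N B t Cs Bs)
             then (\<exists>Cs Bs. R = Some (Cs, Bs) \<and> optimal_svce N B t Cs Bs)
             else R = None))"
proof (cases "root_tbl N B t N N = \<infinity>")
  case True
  then have "\<not> (\<exists>Cs Bs. is_svce N B t Cs Bs)"
    using root_tbl_le_svce_cost[OF assms(1,3)] by force
  then show ?thesis using True by (simp add: alg1_output_def)
next
  case False
  then interpret dp_feasible N B t using assms by unfold_locales
  have "\<exists>Cs Bs. is_svce N B t Cs Bs"
    using alg1_output_exists alg1_output_optimal unfolding optimal_svce_def by blast
  then show ?thesis using alg1_output_exists alg1_output_optimal by auto
qed

end
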